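(* Let $\lambda$ be a (straight or skew) shape with $n$ boxes and let $m\in\mathbb N=\{1,2,3,\dots\}$. Then there is a bijection $$T[\lambda,0,+]=T[\lambda,\boxtimes]\cup T[\lambda,\div,+]\cup T[\lambda,\cdot|\cdot,+]\;\longrightarrow\;T[\lambda,m,+]$$ and a bijection $$T[\lambda,0,-]=T[\lambda,\boxtimes]\cup T[\lambda,\div,-]\cup T[\lambda,\cdot|\cdot,-]\;\longrightarrow\;T[\lambda,m,-],$$ each sending a tableau $X$ to the unique tableau $Y$ whose positive-content part, as a filling of $\lambda$, equals the nonnegative half of $X$ as a filling of $\lambda$.
   Context: Boxes of a diagram are indexed by (row $i$, column $j$), rows numbered downward and columns rightward; the content of box $(i,j)$ is $j-i$. A D-Young tableau is a filling of a skew diagram by the $2n$ numbers $\pm1,\dots,\pm n$, each number in exactly one box and each box containing one number, except that a box of content $0$ may contain a pair $\pm i$; with $c_k$ the content of the box containing $k$, one requires $c_{-k}=-c_k$. It is standard if entries increase along rows (left to right) and down columns (a box containing $\pm i$, $i>0$, counts as $-i$ when compared with entries to its left or above and as $i$ when compared with entries to its right or below). A D-Young tableau with no box of content $0$ is regarded as determined by its positive-content part (entries and contents). Let $\lambda$ be a shape with $n$ boxes. For $m\in\mathbb N$, $T[\lambda,m,\pm]$ is the set of standard D-Young tableaux whose smallest nonnegative content is $m$, whose positive-content boxes form the shape $\lambda$, with an even ($+$) / odd ($-$) number of negative entries among the positive-content boxes. $T[\lambda,\boxtimes]$ is the set of standard D-Young tableaux having exactly one box of content $0$ (necessarily containing a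 pair $\pm i$) whose boxes of nonnegative content form the shape $\lambda$; its nonnegative half is the filling of $\lambda$ by these boxes, where the zero-content box is regarded as containing $i$ or $-i$, the sign chosen so that the number of negative entries is even (for the $+$ bijection) or odd (for the $-$ bijection). $T[\lambda,\cdot|\cdot,+]$ (resp. $T[\lambda,\div,+]$) is the set of standard D-Young tableaux with exactly two boxes of content $0$ which can be divided by a vertical (resp. horizontal) straight line into two parts of $n$ boxes each, one consisting of boxes of nonnegative content and the other of boxes of nonpositive content, such that the part of nonnegative content (its nonnegative half) has shape $\lambda$ and contains an even number of negative entries; with "odd" instead of "even" one gets $T[\lambda,\cdot|\cdot,-]$, $T[\lambda,\div,-]$. The sets $T[\lambda,0,\pm]$ are defined as the displayed unions. *)

theory Defs
  imports Main
begin

text \<open>Boxes are pairs (row, column) of integers, rows numbered downward,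
columns rightward.  The content of box (i,j) is j - i.\<close>

type_synonym box = "int \<times> int"

definition content :: "box \<Rightarrow> int" where
  "content b = snd b - fst b"

definition translate :: "box \<Rightarrow> box \<Rightarrow> box" where
  "translate v b = (fst b + fst v, snd b + snd v)"

text \<open>A (straight or skew) diagram: a finite set of boxes which is convex for the
product order (rows, columns); these are exactly the skew shapes lambda/mu
up to translation.\<close>

definition skew_diagram :: "box set \<Rightarrow> bool" where
  "skew_diagram D \<longleftrightarrow> finite D \<and>
     (\<forall>a\<in>D. \<forall>c\<in>D. \<forall>b. fst a \<le> fst b \<and> fst b \<le> fst c \<and> snd a \<le> snd b \<and> snd b \<le> snd c
        \<longrightarrow> b \<in> D)"

definition Nums :: "nat \<Rightarrow> int set" where
  "Nums n = {k. k \<noteq> 0 \<and> \<bar>k\<bar> \<le> int n}"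

text \<open>A D-Young tableau of rank n is given by the position map: number k is placed
in box pos k.\<close>

definition diagram :: "nat \<Rightarrow> (int \<Rightarrow> box) \<Rightarrow> box set" where
  "diagram n pos = pos ` Nums n"

definition entries :: "nat \<Rightarrow> (int \<Rightarrow> box) \<Rightarrow> box \<Rightarrow> int set" where
  "entries n pos b = {k \<in> Nums n. pos k = b}"

definition D_tableau :: "nat \<Rightarrow> (int \<Rightarrow> box) \<Rightarrow> bool" where
  "D_tableau n pos \<longleftrightarrow>
     skew_diagram (diagram n pos) \<and>
     (\<forall>k\<in>Nums n. \<forall>l\<in>Nums n. k \<noteq> l \<and> pos k = pos l \<longrightarrow> l = - k \<and> content (pos k) = 0) \<and>
     (\<forall>k\<in>Nums n. content (pos (- k)) = - content (pos k))"

text \<open>Standardness: a box with a pair +-i counts as -i (its minimum) when compared with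
boxes to its left / above and as i (its maximum) when compared with boxes to its
right / below.\<close>

definition standard :: "nat \<Rightarrow> (int \<Rightarrow> box) \<Rightarrow> bool" where
  "standard n pos \<longleftrightarrow>
     (\<forall>b\<in>diagram n pos. \<forall>b'\<in>diagram n pos.
        ((fst b = fst b' \<and> snd b < snd b') \<or> (snd b = snd b' \<and> fst b < fst b'))
        \<longrightarrow> Max (entries n pos b) < Min (entries n pos b'))"

definition zero_boxes :: "nat \<Rightarrow> (int \<Rightarrow> box) \<Rightarrow> box set" where
  "zero_boxes n pos = {b \<in> diagram n pos. content b = 0}"

definition pos_boxes :: "nat \<Rightarrow> (int \<Rightarrow> box) \<Rightarrow> box set" where
  "pos_boxes n pos = {b \<in> diagram n pos. content b > 0}"

definition nonneg_boxes :: "nat \<Rightarrow> (int \<Rightarrow> box) \<Rightarrow> box set" where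
  "nonneg_boxes n pos = {b \<in> diagram n pos. content b \<ge> 0}"

definition has_shape :: "box set \<Rightarrow> box set \<Rightarrow> bool" where
  "has_shape lam S \<longleftrightarrow> (\<exists>v. S = translate v ` lam)"

definition neg_count :: "nat \<Rightarrow> (int \<Rightarrow> box) \<Rightarrow> box set \<Rightarrow> nat" where
  "neg_count n pos S = card {k \<in> Nums n. k < 0 \<and> pos k \<in> S}"

text \<open>Parity flag: s = True means even (+), s = False means odd (-).\<close>

definition parity_ok :: "bool \<Rightarrow> nat \<Rightarrow> bool" where
  "parity_ok s c \<longleftrightarrow> (even c = s)"

definition T_m :: "box set \<Rightarrow> nat \<Rightarrow> nat \<Rightarrow> bool \<Rightarrow> (int \<Rightarrow> box) set" where
  "T_m lam n m s = {pos. D_tableau n pos \<and> standard n pos \<and>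
     (\<exists>b\<in>diagram n pos. content b = int m) \<and>
     (\<forall>b\<in>diagram n pos. content b \<ge> 0 \<longrightarrow> content b \<ge> int m) \<and>
     has_shape lam (pos_boxes n pos) \<and>
     parity_ok s (neg_count n pos (pos_boxes n pos))}"

definition T_box :: "box set \<Rightarrow> nat \<Rightarrow> (int \<Rightarrow> box) set" where
  "T_box lam n = {pos. D_tableau n pos \<and> standard n pos \<and>
     card (zero_boxes n pos) = 1 \<and> has_shape lam (nonneg_boxes n pos)}"

definition vsplit :: "nat \<Rightarrow> box set \<Rightarrow> box set \<Rightarrow> bool" where
  "vsplit n D S \<longleftrightarrow> (\<exists>t::int.
     (S = {b \<in> D. snd b \<le> t} \<or> S = {b \<in> D. snd b > t}) \<and>
     card S = n \<and> card (D - S) = n \<and>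
     (\<forall>b\<in>S. content b \<ge> 0) \<and> (\<forall>b\<in>D - S. content b \<le> 0))"

definition hsplit :: "nat \<Rightarrow> box set \<Rightarrow> box set \<Rightarrow> bool" where
  "hsplit n D S \<longleftrightarrow> (\<exists>t::int.
     (S = {b \<in> D. fst b \<le> t} \<or> S = {b \<in> D. fst b > t}) \<and>
     card S = n \<and> card (D - S) = n \<and>
     (\<forall>b\<in>S. content b \<ge> 0) \<and> (\<forall>b\<in>D - S. content b \<le> 0))"

definition T_vert :: "box set \<Rightarrow> nat \<Rightarrow> bool \<Rightarrow> (int \<Rightarrow> box) set" where
  "T_vert lam n s = {pos. D_tableau n pos \<and> standard n pos \<and>
     card (zero_boxes n pos) = 2 \<and>
     (\<exists>S. vsplit n (diagram n pos) S \<and> has_shape lam S \<and> parity_ok s (neg_count n pos S))}"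

definition T_horiz :: "box set \<Rightarrow> nat \<Rightarrow> bool \<Rightarrow> (int \<Rightarrow> box) set" where
  "T_horiz lam n s = {pos. D_tableau n pos \<and> standard n pos \<and>
     card (zero_boxes n pos) = 2 \<and>
     (\<exists>S. hsplit n (diagram n pos) S \<and> has_shape lam S \<and> parity_ok s (neg_count n pos S))}"

definition T_zero :: "box set \<Rightarrow> nat \<Rightarrow> bool \<Rightarrow> (int \<Rightarrow> box) set" where
  "T_zero lam n s = T_box lam n \<union> T_horiz lam n s \<union> T_vert lam n s"

definition nonneg_part_ok :: "box set \<Rightarrow> nat \<Rightarrow> bool \<Rightarrow> (int \<Rightarrow> box) \<Rightarrow> box set \<Rightarrow> bool" where
  "nonneg_part_ok lam n s pos S \<longleftrightarrow>
     (card (zero_boxes n pos) = 1 \<and> S = nonneg_boxes n pos \<and> has_shape lam S) \<or>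
     (card (zero_boxes n pos) = 2 \<and> (vsplit n (diagram n pos) S \<or> hsplit n (diagram n pos) S) \<and>
        has_shape lam S \<and> parity_ok s (neg_count n pos S))"

definition box_entry :: "nat \<Rightarrow> bool \<Rightarrow> (int \<Rightarrow> box) \<Rightarrow> box \<Rightarrow> int" where
  "box_entry n s pos B =
     (if card (entries n pos B) = 1 then the_elem (entries n pos B)
      else (let i = Max (entries n pos B) in
            if parity_ok s (neg_count n pos (pos_boxes n pos)) then i else - i))"

definition fill_of :: "box set \<Rightarrow> nat \<Rightarrow> bool \<Rightarrow> (int \<Rightarrow> box) \<Rightarrow> box set \<Rightarrow> box \<Rightarrow> int" where
  "fill_of lam n s pos S =
     (let v = (SOME v. S = translate v ` lam) in
      (\<lambda>b. if b \<in> lam then box_entry n s pos (translate v b) else 0))"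

definition pos_fill :: "box set \<Rightarrow> nat \<Rightarrow> bool \<Rightarrow> (int \<Rightarrow> box) \<Rightarrow> box \<Rightarrow> int" where
  "pos_fill lam n s pos = fill_of lam n s pos (pos_boxes n pos)"

definition nonneg_fill :: "box set \<Rightarrow> nat \<Rightarrow> bool \<Rightarrow> (int \<Rightarrow> box) \<Rightarrow> box \<Rightarrow> int" where
  "nonneg_fill lam n s pos = fill_of lam n s pos (SOME S. nonneg_part_ok lam n s pos S)"

text \<open>Identification of tableaux: same entries with the same contents and the same
grouping of entries into boxes (geometry up to the paper's identification).\<close>

definition same_tableau :: "nat \<Rightarrow> (int \<Rightarrow> box) \<Rightarrow> (int \<Rightarrow> box) \<Rightarrow> bool" where
  "same_tableau n pos pos' \<longleftrightarrow>
     (\<forall>k\<in>Nums n. content (pos k) = content (pos' k) \<and>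
        (\<forall>l\<in>Nums n. pos k = pos l \<longleftrightarrow> pos' k = pos' l))"

end

theory Submission
  imports Defs "HOL-Library.Product_Order"
begin

text \<open>
  The nonnegative half of a tableau in T[lam,0,+-] and the positive-content part of a
  tableau in T[lam,m,+-] are both standard fillings F of lam by numbers of distinct absolute
  values, with the prescribed parity of the number of negative entries.  Each such F is
  completed in exactly one way.  The box c of lam of least content (its lower left corner)
  is put on content m, resp. 0, and the entries -F fill the copy of lam rotated by 180
  degrees about a point of the diagonal of content 0.  For m >= 1 the two copies are far
  apart.  For m = 0 the copies either overlap in c, which then carries the pair +-F c; this
  is possible exactly when the right neighbour of c has an entry above |F c| and the upper
  neighbour one below -|F c|.  Otherwise the rotated copy is attached directly below lam,
  resp. to its left, according to which of the two inequalities fails.  Uniqueness: F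
  determines the content of every entry, and the corner condition determines which of the
  three kinds of tableau occurs.
\<close>

section \<open>Boxes, translations and rotations\<close>

definition precedes :: "box \<Rightarrow> box \<Rightarrow> bool" where
  "precedes a b \<longleftrightarrow> (fst a = fst b \<and> snd a < snd b) \<or> (snd a = snd b \<and> fst a < fst b)"

definition rot180 :: "int \<Rightarrow> box \<Rightarrow> box" where
  "rot180 t b = (t - fst b, t - snd b)"

lemma finite_Nums [simp]: "finite (Nums n)"
proof -
  have "Nums n \<subseteq> {-int n..int n}" unfolding Nums_def by auto
  then show ?thesis by (rule finite_subset) simp
qed

lemma uminus_mem_Nums [simp]: "- k \<in> Nums n \<longleftrightarrow> k \<in> Nums n"
  unfolding Nums_def by auto

lemma card_Nums: "card (Nums n) = 2 * n"
proof -
  have "Nums n = {-int n..-1} \<union> {1..int n}" unfolding Nums_def by auto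
  moreover have "card ({-int n..-1} \<union> {1..int n}) = 2 * n"
    by (subst card_Un_disjoint) auto
  ultimately show ?thesis by simp
qed

lemma Nums_0 [simp]: "Nums 0 = {}"
  unfolding Nums_def by auto

lemma content_translate [simp]: "content (translate v b) = content b + (snd v - fst v)"
  unfolding content_def translate_def by simp

lemma content_rot180 [simp]: "content (rot180 t b) = - content b"
  unfolding content_def rot180_def by simp

lemma rot180_rot180 [simp]: "rot180 t (rot180 t b) = b"
  unfolding rot180_def by simp

lemma rot180_eq_iff [simp]: "rot180 t a = rot180 t b \<longleftrightarrow> a = b"
  by (metis rot180_rot180)

lemma rot180_le_iff [simp]: "rot180 t a \<le> rot180 t b \<longleftrightarrow> b \<le> a"
  unfolding rot180_def less_eq_prod_def by auto

lemma translate_eq_iff [simp]: "translate v a = translate v b \<longleftrightarrow> a = b"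
  unfolding translate_def by (auto simp: prod_eq_iff)

lemma translate_inverse [simp]: "translate (- fst v, - snd v) (translate v b) = b"
  unfolding translate_def by simp

lemma translate_inverse' [simp]: "translate v (translate (- fst v, - snd v) b) = b"
  unfolding translate_def by simp

lemma translate_le_iff [simp]: "translate v a \<le> translate v b \<longleftrightarrow> a \<le> b"
  unfolding translate_def less_eq_prod_def by auto

lemma precedes_translate [simp]: "precedes (translate v a) (translate v b) \<longleftrightarrow> precedes a b"
  unfolding precedes_def translate_def by auto

lemma precedes_rot180 [simp]: "precedes (rot180 t a) (rot180 t b) \<longleftrightarrow> precedes b a"
  unfolding precedes_def rot180_def by auto

lemma skew_diagram_iff:
  "skew_diagram D \<longleftrightarrow> finite D \<and> (\<forall>a\<in>D. \<forall>c\<in>D. {a..c} \<subseteq> D)"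
  unfolding skew_diagram_def subset_iff atLeastAtMost_iff less_eq_prod_def by blast

lemma skew_diagramD: "skew_diagram D \<Longrightarrow> a \<in> D \<Longrightarrow> c \<in> D \<Longrightarrow> a \<le> b \<Longrightarrow> b \<le> c \<Longrightarrow> b \<in> D"
  unfolding skew_diagram_iff by (meson atLeastAtMost_iff subsetD)

lemma skew_diagram_translate: "skew_diagram D \<Longrightarrow> skew_diagram (translate v ` D)"
  unfolding skew_diagram_iff
proof (intro conjI ballI subsetI)
  assume D: "finite D \<and> (\<forall>a\<in>D. \<forall>c\<in>D. {a..c} \<subseteq> D)"
  then show "finite (translate v ` D)" by simp
  fix a c b assume "a \<in> translate v ` D" "c \<in> translate v ` D" "b \<in> {a..c}"
  moreover have "b = translate v (translate (- fst v, - snd v) b)" by simp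
  ultimately show "b \<in> translate v ` D"
    using D by (smt (verit) atLeastAtMost_iff image_iff subsetD translate_le_iff)
qed

lemma translate_image_inj:
  assumes "finite A" "A \<noteq> {}" "translate v ` A = translate w ` A"
  shows "v = w"
proof -
  have "Min (f ` translate u ` A) = Min (f ` A) + f u" if "f = fst \<or> f = snd" for f u
  proof -
    have "f ` translate u ` A = (\<lambda>x. x + f u) ` f ` A"
      using that by (elim disjE) (simp_all add: translate_def image_image)
    also have "Min \<dots> = Min (f ` A) + f u"
      using assms by (subst mono_Min_commute[symmetric]) (auto simp: mono_def)
    finally show ?thesis .
  qed
  from this[of fst] this[of snd] show ?thesis
    using assms(3) by (metis add_left_cancel prod_eq_iff)
qed

section \<open>Tableaux and their entries\<close>

lemma finite_entries [simp]: "finite (entries n pos b)"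
  unfolding entries_def by simp

lemma standard_iff_precedes:
  "standard n pos \<longleftrightarrow> (\<forall>k\<in>Nums n. \<forall>l\<in>Nums n. precedes (pos k) (pos l) \<longrightarrow> k < l)"
proof
  assume st: "standard n pos"
  show "\<forall>k\<in>Nums n. \<forall>l\<in>Nums n. precedes (pos k) (pos l) \<longrightarrow> k < l"
  proof (intro ballI impI)
    fix k l assume k: "k \<in> Nums n" and l: "l \<in> Nums n" and kl: "precedes (pos k) (pos l)"
    have "Max (entries n pos (pos k)) < Min (entries n pos (pos l))"
      using st k l kl unfolding standard_def precedes_def diagram_def by blast
    moreover have "k \<le> Max (entries n pos (pos k))" using k by (intro Max_ge) (auto simp: entries_def)
    moreover have "Min (entries n pos (pos l)) \<le> l" using l by (intro Min_le) (auto simp: entries_def)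
    ultimately show "k < l" by simp
  qed
next
  assume h: "\<forall>k\<in>Nums n. \<forall>l\<in>Nums n. precedes (pos k) (pos l) \<longrightarrow> k < l"
  show "standard n pos" unfolding standard_def
  proof (intro ballI impI)
    fix b b' assume b: "b \<in> diagram n pos" and b': "b' \<in> diagram n pos"
      and bb': "fst b = fst b' \<and> snd b < snd b' \<or> snd b = snd b' \<and> fst b < fst b'"
    have ne: "entries n pos b \<noteq> {}" "entries n pos b' \<noteq> {}"
      using b b' unfolding diagram_def entries_def by auto
    have "Max (entries n pos b) \<in> entries n pos b" using ne by (intro Max_in) auto
    moreover have "Min (entries n pos b') \<in> entries n pos b'" using ne by (intro Min_in) auto
    ultimately show "Max (entries n pos b) < Min (entries n pos b')"
      using h bb' unfolding entries_def precedes_def by auto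
  qed
qed

lemma D_tableau_same_box:
  assumes "D_tableau n pos" "k \<in> Nums n" "l \<in> Nums n" "pos k = pos l" "k \<noteq> l"
  shows "l = - k \<and> content (pos k) = 0"
  using assms unfolding D_tableau_def by blast

lemma D_tableau_content_uminus:
  "D_tableau n pos \<Longrightarrow> k \<in> Nums n \<Longrightarrow> content (pos (- k)) = - content (pos k)"
  unfolding D_tableau_def by blast

lemma inj_on_if_no_zero_box:
  assumes "D_tableau n pos" "\<forall>b\<in>diagram n pos. content b \<noteq> 0"
  shows "inj_on pos (Nums n)"
proof (rule inj_onI, rule ccontr)
  fix k l assume k: "k \<in> Nums n" and l: "l \<in> Nums n" and "pos k = pos l" "k \<noteq> l"
  then have "content (pos k) = 0" using D_tableau_same_box[OF assms(1)] by blast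
  moreover have "pos k \<in> diagram n pos" using k unfolding diagram_def by blast
  ultimately show False using assms(2) by blast
qed

lemma same_box_iff_one_zero_box:
  assumes dt: "D_tableau n pos" and one: "card (zero_boxes n pos) = 1"
    and k: "k \<in> Nums n" and l: "l \<in> Nums n"
  shows "pos k = pos l \<longleftrightarrow> k = l \<or> (l = - k \<and> content (pos k) = 0)"
proof
  assume "pos k = pos l"
  then show "k = l \<or> (l = - k \<and> content (pos k) = 0)" using D_tableau_same_box[OF dt k l] by blast
next
  assume h: "k = l \<or> (l = - k \<and> content (pos k) = 0)"
  show "pos k = pos l"
  proof (cases "k = l")
    case False
    with h have "l = - k" "content (pos k) = 0" by auto
    moreover from this have "content (pos l) = 0" using D_tableau_content_uminus[OF dt k] by simp
    ultimately have "pos k \<in> zero_boxes n pos" "pos l \<in> zero_boxes n pos"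
      using k l unfolding zero_boxes_def diagram_def by auto
    with one show ?thesis by (metis card_1_singletonE singletonD)
  qed simp
qed

lemma standard_entries_mono:
  assumes dt: "D_tableau n X" and st: "standard n X" and inj: "inj_on X (Nums n)"
    and k: "k \<in> Nums n" and l: "l \<in> Nums n" and le: "X k \<le> X l"
  shows "k \<le> l"
proof -
  let ?c = "(fst (X k), snd (X l))"
  have D: "X k \<in> diagram n X" "X l \<in> diagram n X" using k l unfolding diagram_def by auto
  have "skew_diagram (diagram n X)" using dt unfolding D_tableau_def by blast
  from skew_diagramD[OF this D, of ?c] le have "?c \<in> diagram n X" by (simp add: less_eq_prod_def)
  then obtain j where j: "j \<in> Nums n" "X j = ?c" unfolding diagram_def by auto
  have less: "k' < l'" if "k' \<in> Nums n" "l' \<in> Nums n" "precedes (X k') (X l')" for k' l'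
    using st that unfolding standard_iff_precedes by blast
  have eq: "k' = l'" if "k' \<in> Nums n" "l' \<in> Nums n" "X k' = X l'" for k' l'
    using inj that unfolding inj_on_def by blast
  have "k \<le> j"
  proof (cases "snd (X k) = snd (X l)")
    case True
    with j have "X j = X k" by (simp add: prod_eq_iff)
    with eq[OF j(1) k] show ?thesis by simp
  next
    case False
    with le j have "precedes (X k) (X j)" by (simp add: precedes_def less_eq_prod_def)
    with less[OF k j(1)] show ?thesis by simp
  qed
  moreover have "j \<le> l"
  proof (cases "fst (X k) = fst (X l)")
    case True
    with j have "X j = X l" by (simp add: prod_eq_iff)
    with eq[OF j(1) l] show ?thesis by simp
  next
    case False
    with le j have "precedes (X j) (X l)" by (simp add: precedes_def less_eq_prod_def)
    with less[OF j(1) l] show ?thesis by simp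
  qed
  ultimately show ?thesis by simp
qed

lemma entries_eq_singleton:
  assumes "D_tableau n pos" "k \<in> Nums n" "content (pos k) \<noteq> 0 \<or> inj_on pos (Nums n)"
  shows "entries n pos (pos k) = {k}"
proof -
  have "l = k" if l: "l \<in> Nums n" "pos l = pos k" for l
  proof (rule ccontr)
    assume "l \<noteq> k"
    then have "content (pos k) = 0"
      using D_tableau_same_box[OF assms(1) assms(2) l(1)] l(2) by auto
    moreover have "\<not> inj_on pos (Nums n)"
      using \<open>l \<noteq> k\<close> l assms(2) unfolding inj_on_def by blast
    ultimately show False using assms(3) by blast
  qed
  with assms(2) show ?thesis unfolding entries_def by auto
qed

lemma box_entry_singleton: "entries n pos b = {k} \<Longrightarrow> box_entry n s pos b = k"
  unfolding box_entry_def by simp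

lemma box_entry_mem_entries:
  assumes dt: "D_tableau n pos" and b: "b \<in> diagram n pos"
  shows "box_entry n s pos b \<in> entries n pos b"
proof (cases "card (entries n pos b) = 1")
  case True
  then obtain k where "entries n pos b = {k}" by (rule card_1_singletonE)
  then show ?thesis by (simp add: box_entry_singleton)
next
  case False
  let ?E = "entries n pos b"
  have "?E \<noteq> {}" using b unfolding diagram_def entries_def by auto
  then have M: "Max ?E \<in> ?E" by simp
  have "?E \<noteq> {Max ?E}" using False by (metis One_nat_def card_1_singleton_iff)
  with M obtain k where k: "k \<in> ?E" "k \<noteq> Max ?E" by blast
  with M have "k = - Max ?E"
    using D_tableau_same_box[OF dt, of "Max ?E" k] unfolding entries_def by auto
  with k M False show ?thesis unfolding box_entry_def Let_def by auto
qed

lemma entries_eq_box_entry: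
  assumes dt: "D_tableau n pos" and b: "b \<in> diagram n pos" and "content b \<noteq> 0 \<or> inj_on pos (Nums n)"
  shows "entries n pos b = {box_entry n s pos b}"
proof -
  have "box_entry n s pos b \<in> Nums n" "pos (box_entry n s pos b) = b"
    using box_entry_mem_entries[OF dt b] unfolding entries_def by auto
  with entries_eq_singleton[OF dt] assms(3) show ?thesis by metis
qed

lemma box_entry_pair_iff:
  assumes "entries n pos b = {e, - e}" "e \<noteq> 0"
  shows "box_entry n s pos b = e \<longleftrightarrow>
    parity_ok s (neg_count n pos (pos_boxes n pos) + (if e < 0 then 1 else 0))"
proof -
  have "card (entries n pos b) \<noteq> 1" "Max (entries n pos b) = \<bar>e\<bar>"
    using assms by (auto simp: abs_if max_def)
  then show ?thesis
    using assms(2) unfolding box_entry_def Let_def parity_ok_def by auto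
qed

lemma neg_count_eq_card:
  assumes "\<forall>b\<in>S. entries n pos b = {G b}"
  shows "neg_count n pos S = card {b\<in>S. G b < 0}"
proof -
  have pG: "\<forall>b\<in>S. pos (G b) = b \<and> G b \<in> Nums n" using assms unfolding entries_def by blast
  have "{k \<in> Nums n. k < 0 \<and> pos k \<in> S} = G ` {b\<in>S. G b < 0}"
  proof (intro equalityI subsetI)
    fix k assume k: "k \<in> {k \<in> Nums n. k < 0 \<and> pos k \<in> S}"
    then have "k \<in> entries n pos (pos k)" "pos k \<in> S" unfolding entries_def by auto
    with assms have "k = G (pos k)" by blast
    with k show "k \<in> G ` {b\<in>S. G b < 0}" by (metis (mono_tags, lifting) image_eqI mem_Collect_eq)
  qed (use pG in auto)
  moreover have "inj_on G {b\<in>S. G b < 0}"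
    by (rule inj_onI) (metis (no_types, lifting) mem_Collect_eq pG)
  ultimately show ?thesis unfolding neg_count_def by (simp add: card_image)
qed

lemma neg_count_insert:
  assumes "z \<notin> A" "entries n pos z = {e}"
  shows "neg_count n pos (insert z A) = neg_count n pos A + (if e < 0 then 1 else 0)"
proof -
  have "{k \<in> Nums n. k < 0 \<and> pos k \<in> insert z A} =
      {k \<in> Nums n. k < 0 \<and> pos k \<in> A} \<union> (if e < 0 then {e} else {})"
    "{k \<in> Nums n. k < 0 \<and> pos k \<in> A} \<inter> (if e < 0 then {e} else {}) = {}"
    using assms unfolding entries_def by auto
  then show ?thesis unfolding neg_count_def by (simp add: card_Un_disjoint)
qed

lemma card_negatives_remove:
  assumes "finite S" "z \<in> S"
  shows "card {b\<in>S. G b < 0} = card {b\<in>S - {z}. G b < 0} + (if G z < 0 then 1 else 0)"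
proof -
  have "{b\<in>S. G b < 0} = (if G z < 0 then insert z {b\<in>S - {z}. G b < 0} else {b\<in>S - {z}. G b < 0})"
    using assms(2) by auto
  then show ?thesis using assms(1) by simp
qed

lemma fill_of_translate:
  assumes "finite lam" "lam \<noteq> {}" "S = translate v ` lam"
  shows "fill_of lam n s pos S = (\<lambda>b. if b \<in> lam then box_entry n s pos (translate v b) else 0)"
proof -
  have v: "(SOME v. S = translate v ` lam) = v"
    using assms translate_image_inj by (intro some_equality) auto
  show ?thesis unfolding fill_of_def Let_def v ..
qed

lemma vsplit_or_hsplitD:
  assumes "vsplit n D S \<or> hsplit n D S"
  shows "S \<subseteq> D" "card S = n" "card (D - S) = n"
    "\<forall>b\<in>S. 0 \<le> content b" "\<forall>b\<in>D - S. content b \<le> 0"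
proof -
  from assms obtain t :: int where
    "S = {b\<in>D. snd b \<le> t} \<or> S = {b\<in>D. snd b > t} \<or> S = {b\<in>D. fst b \<le> t} \<or> S = {b\<in>D. fst b > t}"
    and props: "card S = n" "card (D - S) = n" "\<forall>b\<in>S. 0 \<le> content b" "\<forall>b\<in>D - S. content b \<le> 0"
    unfolding vsplit_def hsplit_def by blast
  then have "S \<subseteq> D" by blast
  with props show "S \<subseteq> D" "card S = n" "card (D - S) = n"
    "\<forall>b\<in>S. 0 \<le> content b" "\<forall>b\<in>D - S. content b \<le> 0" by blast+
qed

lemma card_diagram_contents:
  assumes dt: "D_tableau n X"
  shows "card {b\<in>diagram n X. content b < 0} = card {b\<in>diagram n X. 0 < content b}"
    and "card (diagram n X) = card {b\<in>diagram n X. 0 < content b} +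
      card {b\<in>diagram n X. content b < 0} + card (zero_boxes n X)"
proof -
  let ?D = "diagram n X" and ?Kp = "{k\<in>Nums n. content (X k) > 0}"
  let ?Dp = "{b\<in>?D. content b > 0}" and ?Dn = "{b\<in>?D. content b < 0}"
  have neg: "content (X (- k)) = - content (X k)" if "k \<in> Nums n" for k
    using D_tableau_content_uminus[OF dt that] .
  have inj: "inj_on X {k\<in>Nums n. content (X k) \<noteq> 0}"
    using D_tableau_same_box[OF dt] by (auto simp: inj_on_def)
  have "?Dn = X ` uminus ` ?Kp"
  proof (intro equalityI subsetI)
    fix b assume "b \<in> ?Dn"
    then obtain k where k: "k \<in> Nums n" "b = X k" "content (X k) < 0" unfolding diagram_def by auto
    then have "- k \<in> ?Kp" using neg[of k] by simp
    moreover have "b = X (- (- k))" using k(2) by simp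
    ultimately show "b \<in> X ` uminus ` ?Kp" by blast
  next
    fix b assume "b \<in> X ` uminus ` ?Kp"
    then obtain k where "k \<in> ?Kp" "b = X (- k)" by blast
    then show "b \<in> ?Dn" using neg[of k] unfolding diagram_def by auto
  qed
  moreover have "?Dp = X ` ?Kp" unfolding diagram_def by auto
  moreover have "inj_on X (uminus ` ?Kp)" "inj_on X ?Kp"
    using neg by (auto intro!: inj_on_subset[OF inj])
  ultimately show "card ?Dn = card ?Dp" by (simp add: card_image inj_on_def)
  have fin_D: "finite ?D" unfolding diagram_def by simp
  have "?D = ?Dp \<union> ?Dn \<union> zero_boxes n X" unfolding zero_boxes_def by auto
  moreover have "card (?Dp \<union> ?Dn \<union> zero_boxes n X) = card (?Dp \<union> ?Dn) + card (zero_boxes n X)"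
    by (rule card_Un_disjoint) (use fin_D in \<open>auto simp: zero_boxes_def\<close>)
  moreover have "card (?Dp \<union> ?Dn) = card ?Dp + card ?Dn"
    by (rule card_Un_disjoint) (use fin_D in auto)
  ultimately show "card ?D = card ?Dp + card ?Dn + card (zero_boxes n X)" by simp
qed

section \<open>Standard fillings\<close>

definition standard_filling :: "box set \<Rightarrow> nat \<Rightarrow> (box \<Rightarrow> int) \<Rightarrow> bool" where
  "standard_filling S n G \<longleftrightarrow> (\<forall>b\<in>S. G b \<in> Nums n) \<and> inj_on (\<lambda>b. \<bar>G b\<bar>) S \<and>
     (\<forall>b\<in>S. \<forall>b'\<in>S. precedes b b' \<longrightarrow> G b < G b')"

text \<open>Like the fillings produced by fill_of, these vanish outside lam.\<close>

definition standard_fillings :: "box set \<Rightarrow> nat \<Rightarrow> bool \<Rightarrow> (box \<Rightarrow> int) set" where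
  "standard_fillings lam n s = {F. standard_filling lam n F \<and>
     parity_ok s (card {b\<in>lam. F b < 0}) \<and> (\<forall>b. b \<notin> lam \<longrightarrow> F b = 0)}"

definition translate_filling :: "box \<Rightarrow> (box \<Rightarrow> int) \<Rightarrow> box \<Rightarrow> int" where
  "translate_filling v F b = F (translate (- fst v, - snd v) b)"

lemma translate_filling_translate [simp]: "translate_filling v F (translate v b) = F b"
  unfolding translate_filling_def by simp

lemma standard_filling_abs_surj:
  assumes "standard_filling S n G" "finite S" "card S = n" "k \<in> Nums n"
  shows "\<exists>b\<in>S. \<bar>G b\<bar> = \<bar>k\<bar>"
proof -
  have "(\<lambda>b. \<bar>G b\<bar>) ` S \<subseteq> {1..int n}"
    using assms(1) unfolding standard_filling_def Nums_def by auto
  moreover have "card ((\<lambda>b. \<bar>G b\<bar>) ` S) = card {1..int n}"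
    using assms(1,3) unfolding standard_filling_def by (simp add: card_image)
  ultimately have "(\<lambda>b. \<bar>G b\<bar>) ` S = {1..int n}" by (intro card_subset_eq) simp_all
  moreover have "\<bar>k\<bar> \<in> {1..int n}" using assms(4) unfolding Nums_def by auto
  ultimately have "\<bar>k\<bar> \<in> (\<lambda>b. \<bar>G b\<bar>) ` S" by simp
  then show ?thesis by force
qed

lemma standard_filling_cong:
  "(\<And>b. b \<in> S \<Longrightarrow> G b = G' b) \<Longrightarrow> standard_filling S n G \<longleftrightarrow> standard_filling S n G'"
  unfolding standard_filling_def inj_on_def by auto

lemma standard_filling_translate_iff:
  "standard_filling (translate v ` S) n G \<longleftrightarrow> standard_filling S n (\<lambda>b. G (translate v b))"
  unfolding standard_filling_def inj_on_def by auto

lemma standard_filling_translate: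
  "standard_filling S n F \<Longrightarrow> standard_filling (translate v ` S) n (translate_filling v F)"
  unfolding standard_filling_translate_iff by simp

lemma card_negatives_translate:
  "card {b\<in>translate v ` S. G b < 0} = card {b\<in>S. G (translate v b) < 0}"
proof -
  have "{b\<in>translate v ` S. G b < 0} = translate v ` {b\<in>S. G (translate v b) < 0}" by auto
  moreover have "inj_on (translate v) {b\<in>S. G (translate v b) < 0}" by (auto simp: inj_on_def)
  ultimately show ?thesis by (simp add: card_image)
qed

lemma standard_filling_of_tableau:
  assumes dt: "D_tableau n pos" and st: "standard n pos"
    and nonneg: "\<forall>b\<in>S. content b \<ge> 0"
    and one_zero: "\<forall>b\<in>S. \<forall>b'\<in>S. content b = 0 \<longrightarrow> content b' = 0 \<longrightarrow> b = b'"
    and G: "\<forall>b\<in>S. G b \<in> entries n pos b"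
  shows "standard_filling S n G \<and> (\<forall>b\<in>S. pos (G b) = b)"
proof -
  have pG: "\<forall>b\<in>S. pos (G b) = b \<and> G b \<in> Nums n" using G unfolding entries_def by auto
  have "inj_on (\<lambda>b. \<bar>G b\<bar>) S"
  proof (rule inj_onI)
    fix b b' assume b: "b \<in> S" and b': "b' \<in> S" and abs_eq: "\<bar>G b\<bar> = \<bar>G b'\<bar>"
    show "b = b'"
    proof (cases "G b = G b'")
      case True
      then have "pos (G b) = pos (G b')" by simp
      with pG b b' show ?thesis by simp
    next
      case False
      with abs_eq have "G b' = - G b" by arith
      then have "content b' = - content b"
        using D_tableau_content_uminus[OF dt, of "G b"] pG b b' by force
      moreover have "content b \<ge> 0" "content b' \<ge> 0" using nonneg b b' by auto
      ultimately have "content b = 0" "content b' = 0" by auto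
      with one_zero b b' show ?thesis by blast
    qed
  qed
  moreover have "\<forall>b\<in>S. \<forall>b'\<in>S. precedes b b' \<longrightarrow> G b < G b'"
  proof (intro ballI impI)
    fix b b' assume "b \<in> S" "b' \<in> S" "precedes b b'"
    with pG have "precedes (pos (G b)) (pos (G b'))" "G b \<in> Nums n" "G b' \<in> Nums n" by auto
    with st show "G b < G b'" unfolding standard_iff_precedes by blast
  qed
  ultimately show ?thesis using pG unfolding standard_filling_def by blast
qed

lemma standard_filling_mono:
  assumes "skew_diagram S" "standard_filling S n G" "a \<in> S" "b \<in> S" "a \<le> b"
  shows "G a \<le> G b"
proof -
  let ?c = "(fst a, snd b)"
  have G_mono: "\<forall>x\<in>S. \<forall>y\<in>S. precedes x y \<longrightarrow> G x < G y"
    using assms(2) unfolding standard_filling_def by blast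
  have c: "?c \<in> S" using skew_diagramD[OF assms(1,3,4)] assms(5) by (auto simp: less_eq_prod_def)
  have "G a \<le> G ?c"
  proof (cases "snd a = snd b")
    case True
    then have "?c = a" by (simp add: prod_eq_iff)
    then show ?thesis by simp
  next
    case False
    with assms(5) have "precedes a ?c" by (simp add: precedes_def less_eq_prod_def)
    then show ?thesis using G_mono assms(3) c by fastforce
  qed
  moreover have "G ?c \<le> G b"
  proof (cases "fst a = fst b")
    case True
    then have "?c = b" by (simp add: prod_eq_iff)
    then show ?thesis by simp
  next
    case False
    with assms(5) have "precedes ?c b" by (simp add: precedes_def less_eq_prod_def)
    then show ?thesis using G_mono assms(4) c by fastforce
  qed
  ultimately show ?thesis by simp
qed

section \<open>Completing a filling by its rotated copy\<close>

lemma skew_diagram_union_rot180: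
  assumes skew: "skew_diagram P"
    and convex: "\<forall>a\<in>P. \<forall>c\<in>P. {a..rot180 t c} \<union> {rot180 t c..a} \<subseteq> P \<union> rot180 t ` P"
  shows "skew_diagram (P \<union> rot180 t ` P)"
  unfolding skew_diagram_iff
proof (intro conjI ballI subsetI)
  show "finite (P \<union> rot180 t ` P)" using skew unfolding skew_diagram_iff by simp
  fix a c b assume a: "a \<in> P \<union> rot180 t ` P" and c: "c \<in> P \<union> rot180 t ` P" and b: "b \<in> {a..c}"
  show "b \<in> P \<union> rot180 t ` P"
  proof (cases "a \<in> P"; cases "c \<in> P")
    assume "a \<in> P" "c \<in> P"
    with skew b show ?thesis unfolding skew_diagram_iff by blast
  next
    assume "a \<in> P" "c \<notin> P"
    with c obtain c' where "c' \<in> P" "c = rot180 t c'" by blast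
    with convex \<open>a \<in> P\<close> b show ?thesis by blast
  next
    assume "a \<notin> P" "c \<in> P"
    with a obtain a' where "a' \<in> P" "a = rot180 t a'" by blast
    with convex \<open>c \<in> P\<close> b show ?thesis by blast
  next
    assume "a \<notin> P" "c \<notin> P"
    with a c obtain a' c' where "a' \<in> P" "a = rot180 t a'" "c' \<in> P" "c = rot180 t c'" by blast
    with b have "rot180 t b \<in> {c'..a'}"
      using rot180_le_iff[of t "rot180 t b" c'] rot180_le_iff[of t a' "rot180 t b"] by simp
    with skew \<open>a' \<in> P\<close> \<open>c' \<in> P\<close> have "rot180 t b \<in> P" unfolding skew_diagram_iff by blast
    then show ?thesis by (metis UnI2 image_eqI rot180_rot180)
  qed
qed

definition abs_preimage :: "box set \<Rightarrow> (box \<Rightarrow> int) \<Rightarrow> int \<Rightarrow> box" where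
  "abs_preimage P G k = (THE b. b \<in> P \<and> \<bar>G b\<bar> = \<bar>k\<bar>)"

text \<open>The tableau whose nonnegative half is P filled by G, completed by the rotated copy
  rot180 t ` P filled by - G.\<close>

definition sym_tableau :: "box set \<Rightarrow> (box \<Rightarrow> int) \<Rightarrow> int \<Rightarrow> int \<Rightarrow> box" where
  "sym_tableau P G t k =
     (if G (abs_preimage P G k) = k then abs_preimage P G k else rot180 t (abs_preimage P G k))"

locale sym_construction =
  fixes P :: "box set" and G :: "box \<Rightarrow> int" and n :: nat
  assumes filling: "standard_filling P n G" and finite_P: "finite P" and card_P: "card P = n"
begin

lemma G_mem_Nums: "b \<in> P \<Longrightarrow> G b \<in> Nums n"
  using filling unfolding standard_filling_def by blast

lemma G_nonzero: "b \<in> P \<Longrightarrow> G b \<noteq> 0"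
  using G_mem_Nums unfolding Nums_def by blast

lemma abs_preimage_eq:
  assumes "b \<in> P" "\<bar>k\<bar> = \<bar>G b\<bar>"
  shows "abs_preimage P G k = b"
  unfolding abs_preimage_def
proof (rule the_equality)
  show "b \<in> P \<and> \<bar>G b\<bar> = \<bar>k\<bar>" using assms by simp
  fix b' assume "b' \<in> P \<and> \<bar>G b'\<bar> = \<bar>k\<bar>"
  with assms filling show "b' = b" unfolding standard_filling_def inj_on_def by auto
qed

lemma sym_tableau_entry [simp]: "b \<in> P \<Longrightarrow> sym_tableau P G t (G b) = b"
  unfolding sym_tableau_def by (simp add: abs_preimage_eq)

lemma sym_tableau_neg_entry [simp]: "b \<in> P \<Longrightarrow> sym_tableau P G t (- G b) = rot180 t b"
  unfolding sym_tableau_def using G_nonzero by (simp add: abs_preimage_eq)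

lemma Nums_cases:
  assumes "k \<in> Nums n"
  obtains b where "b \<in> P" "k = G b \<or> k = - G b"
proof -
  obtain b where "b \<in> P" "\<bar>G b\<bar> = \<bar>k\<bar>"
    using standard_filling_abs_surj[OF filling finite_P card_P assms] by blast
  moreover from this have "k = G b \<or> k = - G b" by arith
  ultimately show ?thesis using that by blast
qed

lemma mem_entries_sym_tableau:
  "k \<in> entries n (sym_tableau P G t) x \<longleftrightarrow>
     (\<exists>b\<in>P. (k = G b \<and> x = b) \<or> (k = - G b \<and> x = rot180 t b))"
proof
  assume "k \<in> entries n (sym_tableau P G t) x"
  then have k: "k \<in> Nums n" and x: "sym_tableau P G t k = x" unfolding entries_def by auto
  obtain b where "b \<in> P" "k = G b \<or> k = - G b" using Nums_cases[OF k] by blast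
  with x show "\<exists>b\<in>P. (k = G b \<and> x = b) \<or> (k = - G b \<and> x = rot180 t b)" by auto
qed (auto simp: entries_def G_mem_Nums)

lemma diagram_sym_tableau: "diagram n (sym_tableau P G t) = P \<union> rot180 t ` P"
proof -
  have "x \<in> diagram n (sym_tableau P G t) \<longleftrightarrow> (\<exists>k. k \<in> entries n (sym_tableau P G t) x)" for x
    unfolding diagram_def entries_def by auto
  then show ?thesis unfolding mem_entries_sym_tableau by blast
qed

lemma entries_sym_tableau:
  "b \<in> P \<Longrightarrow> b \<notin> rot180 t ` P \<Longrightarrow> entries n (sym_tableau P G t) b = {G b}"
  unfolding set_eq_iff mem_entries_sym_tableau by auto

lemma entries_sym_tableau_rot180:
  "b \<in> P \<Longrightarrow> rot180 t b \<notin> P \<Longrightarrow> entries n (sym_tableau P G t) (rot180 t b) = {- G b}"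
  unfolding set_eq_iff mem_entries_sym_tableau by auto

lemma neg_count_sym_tableau:
  assumes "S \<subseteq> P" "S \<inter> rot180 t ` P = {}"
  shows "neg_count n (sym_tableau P G t) S = card {b\<in>S. G b < 0}"
  using assms entries_sym_tableau by (intro neg_count_eq_card) blast

lemma sym_tableau_same_box:
  assumes overlap: "\<forall>a\<in>P \<inter> rot180 t ` P. rot180 t a = a"
    and k: "k \<in> Nums n" and l: "l \<in> Nums n"
    and same: "sym_tableau P G t k = sym_tableau P G t l" and "k \<noteq> l"
  shows "l = - k \<and> content (sym_tableau P G t k) = 0"
proof -
  have fixed: "b' = b \<and> content b = 0" if "b \<in> P" "b' \<in> P" "b = rot180 t b'" for b b'
  proof -
    have "rot180 t b = b" using overlap that by blast
    then have "b' = b" using that(3) by (metis rot180_rot180)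
    moreover have "content b = - content b" using content_rot180[of t b] \<open>rot180 t b = b\<close> by simp
    ultimately show ?thesis by simp
  qed
  obtain b where b: "b \<in> P" "k = G b \<or> k = - G b" using Nums_cases k by blast
  obtain b' where b': "b' \<in> P" "l = G b' \<or> l = - G b'" using Nums_cases l by blast
  from b(2) b'(2) show ?thesis
  proof (elim disjE)
    assume "k = G b" "l = G b'"
    with same \<open>k \<noteq> l\<close> b(1) b'(1) show ?thesis by auto
  next
    assume "k = G b" "l = - G b'"
    with same b(1) b'(1) have "b = rot180 t b'" by simp
    then have "b' = b \<and> content b = 0" by (rule fixed[OF b(1) b'(1)])
    with \<open>k = G b\<close> \<open>l = - G b'\<close> b(1) show ?thesis by simp
  next
    assume "k = - G b" "l = G b'"
    with same b(1) b'(1) have "b' = rot180 t b" by simp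
    then have "b = b' \<and> content b' = 0" by (rule fixed[OF b'(1) b(1)])
    with \<open>k = - G b\<close> \<open>l = G b'\<close> b(1) show ?thesis by simp
  next
    assume "k = - G b" "l = - G b'"
    with same \<open>k \<noteq> l\<close> b(1) b'(1) show ?thesis by auto
  qed
qed

lemma D_tableau_sym_tableau:
  assumes skew: "skew_diagram (P \<union> rot180 t ` P)"
    and overlap: "\<forall>a\<in>P \<inter> rot180 t ` P. rot180 t a = a"
  shows "D_tableau n (sym_tableau P G t)"
proof -
  have "content (sym_tableau P G t (- k)) = - content (sym_tableau P G t k)" if k: "k \<in> Nums n" for k
  proof -
    obtain b where "b \<in> P" "k = G b \<or> k = - G b" using Nums_cases[OF k] by blast
    then show ?thesis by auto
  qed
  with skew sym_tableau_same_box[OF overlap] show ?thesis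
    unfolding D_tableau_def diagram_sym_tableau by blast
qed

lemma standard_sym_tableau:
  assumes cross: "\<forall>a\<in>P. \<forall>c\<in>P.
      (precedes a (rot180 t c) \<longrightarrow> G a < - G c) \<and> (precedes (rot180 t c) a \<longrightarrow> - G c < G a)"
  shows "standard n (sym_tableau P G t)"
  unfolding standard_iff_precedes
proof (intro ballI impI)
  fix k l assume k: "k \<in> Nums n" and l: "l \<in> Nums n"
    and kl: "precedes (sym_tableau P G t k) (sym_tableau P G t l)"
  have G_mono: "\<forall>b\<in>P. \<forall>b'\<in>P. precedes b b' \<longrightarrow> G b < G b'"
    using filling unfolding standard_filling_def by blast
  obtain b where b: "b \<in> P" "k = G b \<or> k = - G b" using Nums_cases k by blast
  obtain b' where b': "b' \<in> P" "l = G b' \<or> l = - G b'" using Nums_cases l by blast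
  from b(2) b'(2) show "k < l"
  proof (elim disjE)
    assume "k = G b" "l = G b'"
    with kl b(1) b'(1) G_mono show ?thesis by simp
  next
    assume "k = G b" "l = - G b'"
    with kl b(1) b'(1) cross show ?thesis by simp
  next
    assume "k = - G b" "l = G b'"
    with kl b(1) b'(1) cross show ?thesis by simp
  next
    assume "k = - G b" "l = - G b'"
    with kl b(1) b'(1) G_mono show ?thesis by simp
  qed
qed

lemma far_sym_tableau:
  assumes skew: "skew_diagram P" and "1 \<le> m" and region: "\<forall>b\<in>P. fst b \<le> 0 \<and> m \<le> snd b"
  shows "D_tableau n (sym_tableau P G 1) \<and> standard n (sym_tableau P G 1)"
proof -
  have apart: "snd (rot180 1 c) < snd a \<and> fst a < fst (rot180 1 c)" if "a \<in> P" "c \<in> P" for a c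
  proof -
    have "fst a \<le> 0" "m \<le> snd a" "fst c \<le> 0" "m \<le> snd c" using region that by auto
    with \<open>1 \<le> m\<close> show ?thesis by (simp add: rot180_def)
  qed
  have "skew_diagram (P \<union> rot180 1 ` P)"
  proof (intro skew_diagram_union_rot180[OF skew] ballI)
    fix a c assume "a \<in> P" "c \<in> P"
    from apart[OF this] have "\<not> a \<le> rot180 1 c" "\<not> rot180 1 c \<le> a" by (auto simp: less_eq_prod_def)
    then have "{a..rot180 1 c} = {}" "{rot180 1 c..a} = {}" by simp_all
    then show "{a..rot180 1 c} \<union> {rot180 1 c..a} \<subseteq> P \<union> rot180 1 ` P" by simp
  qed
  moreover have "\<forall>a\<in>P \<inter> rot180 1 ` P. rot180 1 a = a"
  proof -
    have False if "a \<in> P" "c \<in> P" "a = rot180 1 c" for a c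
      using apart[OF that(1,2)] that(3) by simp
    then show ?thesis by blast
  qed
  moreover have "\<forall>a\<in>P. \<forall>c\<in>P. (precedes a (rot180 1 c) \<longrightarrow> G a < - G c) \<and>
      (precedes (rot180 1 c) a \<longrightarrow> - G c < G a)"
  proof (intro ballI)
    fix a c assume "a \<in> P" "c \<in> P"
    from apart[OF this] have "\<not> precedes a (rot180 1 c)" "\<not> precedes (rot180 1 c) a"
      by (auto simp: precedes_def)
    then show "(precedes a (rot180 1 c) \<longrightarrow> G a < - G c) \<and> (precedes (rot180 1 c) a \<longrightarrow> - G c < G a)"
      by blast
  qed
  ultimately show ?thesis using D_tableau_sym_tableau standard_sym_tableau by blast
qed

end

text \<open>Whether the corner c can carry a pair +-G c: if so, the nonnegative half (S, G)
  extends to a tableau with a single box of content 0 (the box case); if not, the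
  violated inequality says on which side a second copy of S can be attached.\<close>

definition corner_condition :: "box set \<Rightarrow> (box \<Rightarrow> int) \<Rightarrow> box \<Rightarrow> bool" where
  "corner_condition S G c \<longleftrightarrow>
     ((fst c, snd c + 1) \<in> S \<longrightarrow> \<bar>G c\<bar> < G (fst c, snd c + 1)) \<and>
     ((fst c - 1, snd c) \<in> S \<longrightarrow> G (fst c - 1, snd c) < - \<bar>G c\<bar>)"

locale cornered_filling =
  fixes P :: "box set" and G :: "box \<Rightarrow> int" and n :: nat
  assumes filling: "standard_filling P n G" and card_P: "card P = n"
    and skew: "skew_diagram P" and corner: "(0, 0) \<in> P"
    and quadrant: "\<forall>b\<in>P. fst b \<le> 0 \<and> 0 \<le> snd b"
begin

sublocale sym_construction P G n
  using filling card_P skew unfolding skew_diagram_iff by unfold_locales auto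

lemma fst_le_0: "b \<in> P \<Longrightarrow> fst b \<le> 0" and snd_ge_0: "b \<in> P \<Longrightarrow> 0 \<le> snd b"
  using quadrant by auto

lemma content_nonneg: "b \<in> P \<Longrightarrow> 0 \<le> content b"
  using quadrant unfolding content_def by force

lemma content_eq_0_iff: "b \<in> P \<Longrightarrow> content b = 0 \<longleftrightarrow> b = (0, 0)"
  using quadrant unfolding content_def by (auto simp: prod_eq_iff)

lemma G_le: "a \<in> P \<Longrightarrow> b \<in> P \<Longrightarrow> a \<le> b \<Longrightarrow> G a \<le> G b"
  using standard_filling_mono[OF skew filling] .

lemma G_less: "a \<in> P \<Longrightarrow> b \<in> P \<Longrightarrow> precedes a b \<Longrightarrow> G a < G b"
  using filling unfolding standard_filling_def by blast

lemma mem_between: "a \<in> P \<Longrightarrow> c \<in> P \<Longrightarrow> a \<le> b \<Longrightarrow> b \<le> c \<Longrightarrow> b \<in> P"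
  using skew_diagramD[OF skew] .

lemma skew_diagram_box_union: "skew_diagram (P \<union> rot180 0 ` P)"
proof (rule skew_diagram_union_rot180[OF skew], intro ballI subsetI)
  fix a c b assume a: "a \<in> P" and c: "c \<in> P"
  then have q: "fst a \<le> 0" "0 \<le> snd a" "fst c \<le> 0" "0 \<le> snd c" using fst_le_0 snd_ge_0 by auto
  assume b: "b \<in> {a..rot180 0 c} \<union> {rot180 0 c..a}"
  show "b \<in> P \<union> rot180 0 ` P"
  proof (cases "fst b \<le> 0 \<and> 0 \<le> snd b")
    case True
    with q b have "b \<in> {a..(0, 0)} \<union> {(0, 0)..a}"
      by (auto simp: rot180_def less_eq_prod_def)
    then show ?thesis using mem_between[OF a corner, of b] mem_between[OF corner a, of b] by auto
  next
    case False
    with q b have "rot180 0 b \<in> {c..(0, 0)} \<union> {(0, 0)..c}"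
      by (auto simp: rot180_def less_eq_prod_def)
    then have "rot180 0 b \<in> P"
      using mem_between[OF c corner, of "rot180 0 b"] mem_between[OF corner c, of "rot180 0 b"] by auto
    then show ?thesis by (metis UnI2 image_eqI rot180_rot180)
  qed
qed

lemma skew_diagram_horiz_union:
  assumes right: "(0, 1) \<in> P"
  shows "skew_diagram (P \<union> rot180 1 ` P)"
proof (rule skew_diagram_union_rot180[OF skew], intro ballI subsetI)
  fix a c b assume a: "a \<in> P" and c: "c \<in> P"
  then have q: "fst a \<le> 0" "0 \<le> snd a" "fst c \<le> 0" "0 \<le> snd c" using fst_le_0 snd_ge_0 by auto
  assume b: "b \<in> {a..rot180 1 c} \<union> {rot180 1 c..a}"
  show "b \<in> P \<union> rot180 1 ` P"
  proof (cases "fst b \<le> 0")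
    case True
    with q b have "b \<in> {a..(0, 1)}" by (auto simp: rot180_def less_eq_prod_def)
    then show ?thesis using mem_between[OF a right, of b] by auto
  next
    case False
    with q b have "rot180 1 b \<in> {c..(0, 1)}" by (auto simp: rot180_def less_eq_prod_def)
    then have "rot180 1 b \<in> P" using mem_between[OF c right, of "rot180 1 b"] by auto
    then show ?thesis by (metis UnI2 image_eqI rot180_rot180)
  qed
qed

lemma skew_diagram_vert_union:
  assumes above: "(-1, 0) \<in> P"
  shows "skew_diagram (P \<union> rot180 (-1) ` P)"
proof (rule skew_diagram_union_rot180[OF skew], intro ballI subsetI)
  fix a c b assume a: "a \<in> P" and c: "c \<in> P"
  then have q: "fst a \<le> 0" "0 \<le> snd a" "fst c \<le> 0" "0 \<le> snd c" using fst_le_0 snd_ge_0 by auto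
  assume b: "b \<in> {a..rot180 (-1) c} \<union> {rot180 (-1) c..a}"
  show "b \<in> P \<union> rot180 (-1) ` P"
  proof (cases "0 \<le> snd b")
    case True
    with q b have "b \<in> {(-1, 0)..a}" by (auto simp: rot180_def less_eq_prod_def)
    then show ?thesis using mem_between[OF above a, of b] by auto
  next
    case False
    with q b have "rot180 (-1) b \<in> {(-1, 0)..c}" by (auto simp: rot180_def less_eq_prod_def)
    then have "rot180 (-1) b \<in> P" using mem_between[OF above c, of "rot180 (-1) b"] by auto
    then show ?thesis by (metis UnI2 image_eqI rot180_rot180)
  qed
qed

lemma D_tableau_box: "D_tableau n (sym_tableau P G 0)"
proof (rule D_tableau_sym_tableau[OF skew_diagram_box_union], intro ballI)
  fix a assume "a \<in> P \<inter> rot180 0 ` P"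
  then obtain c where ac: "a \<in> P" "c \<in> P" "a = rot180 0 c" by blast
  have "fst a \<le> 0" "0 \<le> snd a" "fst c \<le> 0" "0 \<le> snd c"
    using ac(1,2) fst_le_0 snd_ge_0 by auto
  moreover have "fst a = - fst c" "snd a = - snd c" using ac(3) by (simp_all add: rot180_def)
  ultimately have "a = (0, 0)" by (simp add: prod_eq_iff)
  then show "rot180 0 a = a" by (simp add: rot180_def)
qed

lemma disjoint_rot180:
  assumes "t = 1 \<or> t = -1"
  shows "P \<inter> rot180 t ` P = {}"
proof -
  have False if "a \<in> P" "c \<in> P" "a = rot180 t c" for a c
    using assms that(3) fst_le_0[OF that(1)] fst_le_0[OF that(2)] snd_ge_0[OF that(1)] snd_ge_0[OF that(2)]
    by (auto simp: rot180_def)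
  then show ?thesis by blast
qed

lemma D_tableau_horiz: "(0, 1) \<in> P \<Longrightarrow> D_tableau n (sym_tableau P G 1)"
  using D_tableau_sym_tableau[OF skew_diagram_horiz_union] disjoint_rot180[of 1] by blast

lemma D_tableau_vert: "(-1, 0) \<in> P \<Longrightarrow> D_tableau n (sym_tableau P G (-1))"
  using D_tableau_sym_tableau[OF skew_diagram_vert_union] disjoint_rot180[of "-1"] by blast

lemma G_le_corner: "(r, 0) \<in> P \<Longrightarrow> G (r, 0) \<le> G (0, 0)"
  using G_le[OF _ corner] fst_le_0 by fastforce

lemma corner_le_G: "(0, s) \<in> P \<Longrightarrow> G (0, 0) \<le> G (0, s)"
  using G_le[OF corner] snd_ge_0 by fastforce

lemma standard_box:
  assumes "corner_condition P G (0, 0)"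
  shows "standard n (sym_tableau P G 0)"
proof (rule standard_sym_tableau, intro ballI conjI impI)
  have right: "\<bar>G (0, 0)\<bar> < G (0, s)" if "(0, s) \<in> P" "0 < s" for s
  proof -
    have "(0, 1) \<in> P" using mem_between[OF corner that(1), of "(0, 1)"] that(2) by simp
    moreover from this have "G (0, 1) \<le> G (0, s)" using G_le that by simp
    ultimately show ?thesis using assms unfolding corner_condition_def by simp
  qed
  have above: "G (r, 0) < - \<bar>G (0, 0)\<bar>" if "(r, 0) \<in> P" "r < 0" for r
  proof -
    have "(-1, 0) \<in> P" using mem_between[OF that(1) corner, of "(-1, 0)"] that(2) by simp
    moreover from this have "G (r, 0) \<le> G (-1, 0)" using G_le that by simp
    ultimately show ?thesis using assms unfolding corner_condition_def by simp
  qed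
  fix a c assume a: "a \<in> P" and c: "c \<in> P"
  obtain ra sa rc sc where ac: "a = (ra, sa)" "c = (rc, sc)" by fastforce
  have q: "ra \<le> 0" "0 \<le> sa" "rc \<le> 0" "0 \<le> sc" using a c ac fst_le_0 snd_ge_0 by auto
  show "G a < - G c" if "precedes a (rot180 0 c)"
  proof -
    from that q ac have "sa = 0" "sc = 0" "ra + rc < 0" by (auto simp: precedes_def rot180_def)
    with a c ac have "(ra, 0) \<in> P" "(rc, 0) \<in> P" by auto
    with \<open>ra + rc < 0\<close> show ?thesis
      using ac \<open>sa = 0\<close> \<open>sc = 0\<close> above G_le_corner by (cases "ra < 0") force+
  qed
  show "- G c < G a" if "precedes (rot180 0 c) a"
  proof -
    from that q ac have "ra = 0" "rc = 0" "0 < sa + sc" by (auto simp: precedes_def rot180_def)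
    with a c ac have "(0, sa) \<in> P" "(0, sc) \<in> P" by auto
    with \<open>0 < sa + sc\<close> show ?thesis
      using ac \<open>ra = 0\<close> \<open>rc = 0\<close> right corner_le_G by (cases "0 < sa") force+
  qed
qed

lemma standard_horiz:
  assumes right: "(0, 1) \<in> P" and less: "G (0, 1) < - G (0, 0)"
  shows "standard n (sym_tableau P G 1)"
proof (rule standard_sym_tableau, intro ballI conjI impI)
  have top_row: "G b \<le> G (0, snd b)" "(0, snd b) \<in> P" if "b \<in> P" "snd b = 0 \<or> snd b = 1" for b
  proof -
    show "(0, snd b) \<in> P" using that(2) corner right by auto
    with that(1) show "G b \<le> G (0, snd b)" using G_le fst_le_0 by (simp add: less_eq_prod_def)
  qed
  fix a c assume a: "a \<in> P" and c: "c \<in> P"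
  have q: "fst a \<le> 0" "0 \<le> snd a" "fst c \<le> 0" "0 \<le> snd c" using a c fst_le_0 snd_ge_0 by auto
  show "G a < - G c" if "precedes a (rot180 1 c)"
  proof -
    from that q have "snd a + snd c = 1" by (auto simp: precedes_def rot180_def)
    with q have "snd a = 0 \<and> snd c = 1 \<or> snd a = 1 \<and> snd c = 0" by auto
    with top_row[OF a] top_row[OF c] less show ?thesis by auto
  qed
  show "- G c < G a" if "precedes (rot180 1 c) a"
    using that q by (auto simp: precedes_def rot180_def)
qed

lemma standard_vert:
  assumes above: "(-1, 0) \<in> P" and less: "- G (0, 0) < G (-1, 0)"
  shows "standard n (sym_tableau P G (-1))"
proof (rule standard_sym_tableau, intro ballI conjI impI)
  have left_col: "G (fst b, 0) \<le> G b" "(fst b, 0) \<in> P" if "b \<in> P" "fst b = 0 \<or> fst b = -1" for b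
  proof -
    show "(fst b, 0) \<in> P" using that(2) corner above by auto
    with that(1) show "G (fst b, 0) \<le> G b" using G_le snd_ge_0 by (simp add: less_eq_prod_def)
  qed
  fix a c assume a: "a \<in> P" and c: "c \<in> P"
  have q: "fst a \<le> 0" "0 \<le> snd a" "fst c \<le> 0" "0 \<le> snd c" using a c fst_le_0 snd_ge_0 by auto
  show "G a < - G c" if "precedes a (rot180 (-1) c)"
    using that q by (auto simp: precedes_def rot180_def)
  show "- G c < G a" if "precedes (rot180 (-1) c) a"
  proof -
    from that q have "fst a + fst c = -1" by (auto simp: precedes_def rot180_def)
    with q have "fst a = 0 \<and> fst c = -1 \<or> fst a = -1 \<and> fst c = 0" by auto
    with left_col[OF a] left_col[OF c] less show ?thesis by auto
  qed
qed

lemma content_rot180_nonneg: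
  assumes "x \<in> rot180 t ` P" "0 \<le> content x"
  shows "x = (t, t)"
proof -
  obtain b where b: "b \<in> P" "x = rot180 t b" using assms(1) by blast
  with assms(2) content_nonneg[OF b(1)] have "b = (0, 0)" using content_eq_0_iff by simp
  with b show ?thesis by (simp add: rot180_def)
qed

lemma rot180_corner: "rot180 t (0, 0) = (t, t)" and content_diag: "content (t, t) = 0"
  by (simp_all add: rot180_def content_def)

lemma diag_mem_rot180: "(t, t) \<in> rot180 t ` P"
  using corner rot180_corner by (metis image_eqI)

lemma zero_boxes_sym_tableau: "zero_boxes n (sym_tableau P G t) = {(0, 0), (t, t)}"
proof (intro equalityI subsetI)
  fix x assume "x \<in> zero_boxes n (sym_tableau P G t)"
  then have "x \<in> P \<union> rot180 t ` P" "content x = 0"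
    unfolding zero_boxes_def diagram_sym_tableau by auto
  then show "x \<in> {(0, 0), (t, t)}"
    using content_eq_0_iff[of x] content_rot180_nonneg[of x t] by (cases "x \<in> P") simp_all
next
  fix x assume "x \<in> {(0, 0), (t, t)}"
  then show "x \<in> zero_boxes n (sym_tableau P G t)"
    unfolding zero_boxes_def diagram_sym_tableau using corner diag_mem_rot180 content_diag[of 0]
    by (auto simp: content_diag)
qed

lemma nonneg_boxes_box: "nonneg_boxes n (sym_tableau P G 0) = P"
proof (intro equalityI subsetI)
  fix x assume "x \<in> nonneg_boxes n (sym_tableau P G 0)"
  then have "x \<in> P \<union> rot180 0 ` P" "0 \<le> content x"
    unfolding nonneg_boxes_def diagram_sym_tableau by auto
  then show "x \<in> P" using content_rot180_nonneg[of x 0] corner by (metis UnE)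
qed (auto simp: nonneg_boxes_def diagram_sym_tableau content_nonneg)

lemma pos_boxes_box: "pos_boxes n (sym_tableau P G 0) = P - {(0, 0)}"
proof (intro equalityI subsetI)
  fix x assume "x \<in> pos_boxes n (sym_tableau P G 0)"
  then have "x \<in> P \<union> rot180 0 ` P" "0 < content x"
    unfolding pos_boxes_def diagram_sym_tableau by auto
  moreover from this(2) have "x \<noteq> (0, 0)" by (auto simp: content_def)
  ultimately have "x \<notin> rot180 0 ` P" "x \<noteq> (0, 0)"
    using content_rot180_nonneg[of x 0] by (meson less_imp_le)+
  with \<open>x \<in> P \<union> rot180 0 ` P\<close> show "x \<in> P - {(0, 0)}" by blast
next
  fix x assume x: "x \<in> P - {(0, 0)}"
  then have "0 < content x" using content_nonneg[of x] content_eq_0_iff[of x] by auto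
  with x show "x \<in> pos_boxes n (sym_tableau P G 0)"
    unfolding pos_boxes_def diagram_sym_tableau by auto
qed

lemma entries_box_corner: "entries n (sym_tableau P G 0) (0, 0) = {G (0, 0), - G (0, 0)}"
proof -
  have "(0, 0) = rot180 0 b \<longleftrightarrow> b = (0, 0)" for b
    by (cases b) (auto simp: rot180_def)
  then show ?thesis unfolding set_eq_iff mem_entries_sym_tableau using corner by auto
qed

lemma box_entry_box:
  assumes parity: "parity_ok s (card {b\<in>P. G b < 0})" and b: "b \<in> P"
  shows "box_entry n s (sym_tableau P G 0) b = G b"
proof (cases "b = (0, 0)")
  case True
  have "x = (0, 0)" if "x \<in> P" "x \<in> rot180 0 ` P" for x
    using content_rot180_nonneg[OF that(2) content_nonneg[OF that(1)]] by simp
  then have "(P - {(0, 0)}) \<inter> rot180 0 ` P = {}" by blast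
  then have "neg_count n (sym_tableau P G 0) (pos_boxes n (sym_tableau P G 0)) =
      card {b\<in>P - {(0, 0)}. G b < 0}"
    unfolding pos_boxes_box by (intro neg_count_sym_tableau) auto
  with parity have "box_entry n s (sym_tableau P G 0) (0, 0) = G (0, 0)"
    using card_negatives_remove[OF finite_P corner, of G]
    by (subst box_entry_pair_iff[OF entries_box_corner G_nonzero[OF corner]]) simp
  with True show ?thesis by simp
next
  case False
  with b have "b \<notin> rot180 0 ` P" using content_rot180_nonneg[of b 0] content_nonneg[OF b] by auto
  with b show ?thesis by (simp add: entries_sym_tableau box_entry_singleton)
qed

lemma
  assumes "t = 1 \<or> t = -1"
  shows diagram_minus_two: "diagram n (sym_tableau P G t) - P = rot180 t ` P"
    and card_zero_boxes_two: "card (zero_boxes n (sym_tableau P G t)) = 2"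
    and neg_count_two: "neg_count n (sym_tableau P G t) P = card {b\<in>P. G b < 0}"
  using disjoint_rot180[OF assms] assms
  by (auto simp: diagram_sym_tableau zero_boxes_sym_tableau neg_count_sym_tableau)

lemma box_entry_two:
  assumes "t = 1 \<or> t = -1" "b \<in> P"
  shows "box_entry n s (sym_tableau P G t) b = G b"
proof -
  have "b \<notin> rot180 t ` P" using disjoint_rot180[OF assms(1)] assms(2) by blast
  with assms(2) show ?thesis by (simp add: entries_sym_tableau box_entry_singleton)
qed

lemma split_candidates:
  assumes t: "t = 1 \<or> t = -1"
    and split: "vsplit n (diagram n (sym_tableau P G t)) S \<or> hsplit n (diagram n (sym_tableau P G t)) S"
  shows "S = P \<or> S = insert (t, t) (P - {(0, 0)})"
proof -
  note S = vsplit_or_hsplitD[OF split, unfolded diagram_sym_tableau]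
  have SQ: "S \<inter> rot180 t ` P \<subseteq> {(t, t)}"
  proof
    fix x assume "x \<in> S \<inter> rot180 t ` P"
    with S(4) show "x \<in> {(t, t)}" using content_rot180_nonneg[of x t] by auto
  qed
  have PS: "P - S \<subseteq> {(0, 0)}"
  proof
    fix x assume x: "x \<in> P - S"
    with S(5) have "content x \<le> 0" by blast
    with x content_nonneg[of x] content_eq_0_iff[of x] show "x \<in> {(0, 0)}" by auto
  qed
  have fin_S: "finite S" using S(1) finite_P finite_subset by blast
  show ?thesis
  proof (cases "(0, 0) \<in> S")
    case True
    with PS have "P \<subseteq> S" by blast
    from card_subset_eq[OF fin_S this] S(2) card_P show ?thesis by simp
  next
    case False
    have "(t, t) \<in> S"
    proof (rule ccontr)
      assume "(t, t) \<notin> S"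
      with S(1) SQ False have "S \<subseteq> P - {(0, 0)}" by auto
      then have "card S \<le> card (P - {(0, 0)})" using finite_P by (intro card_mono) auto
      moreover have "card (P - {(0, 0)}) < card P" by (rule card_Diff1_less[OF finite_P corner])
      ultimately show False using S(2) card_P by simp
    qed
    with S(1) SQ PS False show ?thesis by blast
  qed
qed

text \<open>In the two-box case the nonnegative half is not determined by the tableau alone:
  the other candidate, obtained by exchanging the two boxes of content 0, is ruled out by
  its parity.\<close>

lemma split_unique:
  assumes t: "t = 1 \<or> t = -1"
    and parity: "parity_ok s (card {b\<in>P. G b < 0})"
    and split: "vsplit n (diagram n (sym_tableau P G t)) S \<or> hsplit n (diagram n (sym_tableau P G t)) S"
    and parity_S: "parity_ok s (neg_count n (sym_tableau P G t) S)"
  shows "S = P"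
proof (rule ccontr)
  let ?p = "sym_tableau P G t" and ?A = "P - {(0, 0)}"
  assume "S \<noteq> P"
  with split_candidates[OF t split] have S_eq: "S = insert (t, t) ?A" by blast
  have disj: "P \<inter> rot180 t ` P = {}" by (rule disjoint_rot180[OF t])
  then have "(t, t) \<notin> P" using diag_mem_rot180 by blast
  then have "entries n ?p (t, t) = {- G (0, 0)}"
    using entries_sym_tableau_rot180[OF corner] by (simp add: rot180_corner)
  then have "neg_count n ?p S = neg_count n ?p ?A + (if - G (0, 0) < 0 then 1 else 0)"
    unfolding S_eq using \<open>(t, t) \<notin> P\<close> by (intro neg_count_insert) auto
  moreover have "neg_count n ?p P = neg_count n ?p ?A + (if G (0, 0) < 0 then 1 else 0)"
  proof -
    have "entries n ?p (0, 0) = {G (0, 0)}"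
      using entries_sym_tableau[OF corner] disj corner by blast
    then have "neg_count n ?p (insert (0, 0) ?A) = neg_count n ?p ?A + (if G (0, 0) < 0 then 1 else 0)"
      by (intro neg_count_insert) simp
    with corner show ?thesis by (simp add: insert_absorb)
  qed
  ultimately show False
    using parity parity_S neg_count_two[OF t] G_nonzero[OF corner]
    unfolding parity_ok_def by (cases "G (0, 0) < 0") auto
qed

lemma card_rot180: "card (rot180 t ` P) = n"
  using card_P by (simp add: card_image inj_on_def)

lemma content_rot180_nonpos: "x \<in> rot180 t ` P \<Longrightarrow> content x \<le> 0"
  using content_nonneg by auto

lemma hsplit_horiz: "hsplit n (diagram n (sym_tableau P G 1)) P"
  unfolding hsplit_def
proof (intro exI[of _ 0] conjI disjI1)
  have "fst (rot180 1 b) > 0" if "b \<in> P" for b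
    using fst_le_0[OF that] by (simp add: rot180_def)
  then show "P = {b \<in> diagram n (sym_tableau P G 1). fst b \<le> 0}"
    unfolding diagram_sym_tableau using fst_le_0 by fastforce
  show "card (diagram n (sym_tableau P G 1) - P) = n"
    by (simp add: diagram_minus_two card_rot180)
  show "\<forall>b\<in>diagram n (sym_tableau P G 1) - P. content b \<le> 0"
    by (simp add: diagram_minus_two content_rot180_nonpos)
qed (use card_P content_nonneg in auto)

lemma vsplit_vert: "vsplit n (diagram n (sym_tableau P G (-1))) P"
  unfolding vsplit_def
proof (intro exI[of _ "-1"] conjI disjI2)
  have "snd (rot180 (-1) b) < 0" if "b \<in> P" for b
    using snd_ge_0[OF that] by (simp add: rot180_def)
  then show "P = {b \<in> diagram n (sym_tableau P G (-1)). snd b > -1}"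
    unfolding diagram_sym_tableau using snd_ge_0 by fastforce
  show "card (diagram n (sym_tableau P G (-1)) - P) = n"
    by (simp add: diagram_minus_two card_rot180)
  show "\<forall>b\<in>diagram n (sym_tableau P G (-1)) - P. content b \<le> 0"
    by (simp add: diagram_minus_two content_rot180_nonpos)
qed (use card_P content_nonneg in auto)

lemma corner_condition_cases:
  obtains "corner_condition P G (0, 0)"
    | "(0, 1) \<in> P" "G (0, 1) < - G (0, 0)"
    | "(-1, 0) \<in> P" "- G (0, 0) < G (-1, 0)"
proof -
  have abs_ne: "\<bar>G b\<bar> \<noteq> \<bar>G (0, 0)\<bar>" if "b \<in> P" "b \<noteq> (0, 0)" for b
    using filling that corner unfolding standard_filling_def inj_on_def by blast
  show ?thesis
  proof (cases "corner_condition P G (0, 0)")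
    case False
    then consider "(0, 1) \<in> P" "G (0, 1) \<le> \<bar>G (0, 0)\<bar>" | "(-1, 0) \<in> P" "- \<bar>G (0, 0)\<bar> \<le> G (-1, 0)"
      unfolding corner_condition_def by force
    then show ?thesis
    proof cases
      case 1
      moreover from this have "G (0, 0) < G (0, 1)" using G_less[OF corner] by (simp add: precedes_def)
      moreover have "\<bar>G (0, 1)\<bar> \<noteq> \<bar>G (0, 0)\<bar>" using abs_ne 1 by simp
      ultimately have "G (0, 1) < - G (0, 0)" by arith
      with 1 that(2) show ?thesis by blast
    next
      case 2
      moreover from this have "G (-1, 0) < G (0, 0)" using G_less[OF _ corner] by (simp add: precedes_def)
      moreover have "\<bar>G (-1, 0)\<bar> \<noteq> \<bar>G (0, 0)\<bar>" using abs_ne 2 by simp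
      ultimately have "- G (0, 0) < G (-1, 0)" by arith
      with 2 that(3) show ?thesis by blast
    qed
  qed (rule that(1))
qed

end

section \<open>Realising a standard filling\<close>

definition lower_left_corner :: "box set \<Rightarrow> box \<Rightarrow> bool" where
  "lower_left_corner lam c \<longleftrightarrow> c \<in> lam \<and> (\<forall>b\<in>lam. fst b \<le> fst c \<and> snd c \<le> snd b)"

lemma lower_left_corner_exists:
  assumes skew: "skew_diagram lam" and "lam \<noteq> {}"
  obtains c where "lower_left_corner lam c"
proof -
  have fin: "finite lam" using skew unfolding skew_diagram_iff by simp
  define r where "r = Max (fst ` lam)"
  define q where "q = Min (snd ` lam)"
  have "r \<in> fst ` lam" "q \<in> snd ` lam" using fin assms(2) unfolding r_def q_def by simp_all
  then obtain b1 b2 where b1: "b1 \<in> lam" "fst b1 = r" and b2: "b2 \<in> lam" "snd b2 = q" by force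
  have bounds: "\<forall>b\<in>lam. fst b \<le> r \<and> q \<le> snd b" using fin unfolding r_def q_def by simp
  have "b2 \<le> (r, q)" "(r, q) \<le> b1" using b1 b2 bounds by (auto simp: less_eq_prod_def)
  then have "(r, q) \<in> lam" using skew_diagramD[OF skew b2(1) b1(1)] by simp
  with bounds show ?thesis using that unfolding lower_left_corner_def by auto
qed

lemma content_lower_left_corner_le: "lower_left_corner lam c \<Longrightarrow> b \<in> lam \<Longrightarrow> content c \<le> content b"
  unfolding lower_left_corner_def content_def by force

locale corner_placement =
  fixes lam :: "box set" and n :: nat and s :: bool and F :: "box \<Rightarrow> int" and c :: box
  assumes skew: "skew_diagram lam" and card_lam: "card lam = n"
    and F: "F \<in> standard_fillings lam n s" and corner: "lower_left_corner lam c"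
begin

lemma finite_lam: "finite lam" and lam_nonempty: "lam \<noteq> {}"
  using skew corner unfolding skew_diagram_iff lower_left_corner_def by auto

lemma placed_construction: "sym_construction (translate v ` lam) (translate_filling v F) n"
  using F card_lam finite_lam
  by unfold_locales (auto simp: standard_fillings_def standard_filling_translate card_image inj_on_def)

lemma parity_placed: "parity_ok s (card {b\<in>translate v ` lam. translate_filling v F b < 0})"
  using F unfolding standard_fillings_def card_negatives_translate by simp

lemma has_shape_placed: "has_shape lam (translate v ` lam)"
  unfolding has_shape_def by blast

lemma fill_of_placed:
  assumes "\<forall>b\<in>translate v ` lam. box_entry n s p b = translate_filling v F b"
  shows "fill_of lam n s p (translate v ` lam) = F"
  using assms F unfolding fill_of_translate[OF finite_lam lam_nonempty refl] standard_fillings_def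
  by auto

abbreviation to_origin :: box where
  "to_origin \<equiv> (- fst c, - snd c)"

abbreviation P0 :: "box set" where
  "P0 \<equiv> translate to_origin ` lam"

abbreviation G0 :: "box \<Rightarrow> int" where
  "G0 \<equiv> translate_filling to_origin F"

lemma cornered_placed: "cornered_filling P0 G0 n"
proof -
  interpret sym_construction P0 G0 n by (rule placed_construction)
  show ?thesis
  proof
    show "skew_diagram P0" by (rule skew_diagram_translate[OF skew])
    have "translate to_origin c = (0, 0)" by (simp add: translate_def)
    with corner show "(0, 0) \<in> P0" unfolding lower_left_corner_def by (metis image_eqI)
    show "\<forall>b\<in>P0. fst b \<le> 0 \<and> 0 \<le> snd b"
      using corner unfolding lower_left_corner_def translate_def by auto
  qed (rule filling, rule card_P)
qed

lemma T_m_realization: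
  assumes "1 \<le> m"
  shows "\<exists>Y\<in>T_m lam n m s. pos_fill lam n s Y = F"
proof -
  define v where "v = (- fst c, int m - snd c)"
  let ?P = "translate v ` lam" and ?G = "translate_filling v F"
  let ?Y = "sym_tableau ?P ?G 1"
  interpret sym_construction ?P ?G n by (rule placed_construction)
  have region: "\<forall>b\<in>?P. fst b \<le> 0 \<and> int m \<le> snd b"
    using corner unfolding lower_left_corner_def v_def translate_def by auto
  have ok: "D_tableau n ?Y \<and> standard n ?Y"
    using far_sym_tableau[OF skew_diagram_translate[OF skew] _ region] assms by simp
  have ge_m: "int m \<le> content b" if "b \<in> ?P" for b
    using region that unfolding content_def by force
  have neg: "content b < 0" if "b \<in> rot180 1 ` ?P" for b
    using that ge_m assms by force
  have disj: "?P \<inter> rot180 1 ` ?P = {}" using ge_m neg assms by force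
  have pos_boxes: "pos_boxes n ?Y = ?P"
    unfolding pos_boxes_def diagram_sym_tableau using ge_m neg assms by force
  have "?Y \<in> T_m lam n m s"
    unfolding T_m_def mem_Collect_eq
  proof (intro conjI)
    show "D_tableau n ?Y" "standard n ?Y" using ok by simp_all
    have "translate v c \<in> ?P" "content (translate v c) = int m"
      using corner unfolding lower_left_corner_def v_def by (auto simp: translate_def content_def)
    then show "\<exists>b\<in>diagram n ?Y. content b = int m" unfolding diagram_sym_tableau by blast
    show "\<forall>b\<in>diagram n ?Y. 0 \<le> content b \<longrightarrow> int m \<le> content b"
    proof (intro ballI impI)
      fix b assume "b \<in> diagram n ?Y" "0 \<le> content b"
      then show "int m \<le> content b"
        unfolding diagram_sym_tableau using ge_m[of b] neg[of b] by fastforce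
    qed
    show "has_shape lam (pos_boxes n ?Y)" unfolding pos_boxes by (rule has_shape_placed)
    show "parity_ok s (neg_count n ?Y (pos_boxes n ?Y))"
      unfolding pos_boxes neg_count_sym_tableau[OF subset_refl disj] by (rule parity_placed)
  qed
  moreover have "pos_fill lam n s ?Y = F"
    unfolding pos_fill_def pos_boxes
  proof (rule fill_of_placed, intro ballI)
    fix b assume b: "b \<in> ?P"
    with disj have "b \<notin> rot180 1 ` ?P" by blast
    with b show "box_entry n s ?Y b = ?G b" by (simp add: entries_sym_tableau box_entry_singleton)
  qed
  ultimately show ?thesis by blast
qed

lemma T_box_realization:
  assumes "corner_condition P0 G0 (0, 0)"
  shows "\<exists>X\<in>T_box lam n. nonneg_fill lam n s X = F"
proof -
  interpret cornered_filling P0 G0 n by (rule cornered_placed)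
  let ?X = "sym_tableau P0 G0 0"
  have one: "card (zero_boxes n ?X) = 1" by (simp add: zero_boxes_sym_tableau)
  have half: "(SOME S. nonneg_part_ok lam n s ?X S) = P0"
    using one nonneg_boxes_box has_shape_placed unfolding nonneg_part_ok_def by (intro some_equality) auto
  have "?X \<in> T_box lam n"
    unfolding T_box_def using D_tableau_box standard_box[OF assms] one nonneg_boxes_box has_shape_placed
    by simp
  moreover have "nonneg_fill lam n s ?X = F"
    unfolding nonneg_fill_def half using box_entry_box[OF parity_placed] by (intro fill_of_placed) simp
  ultimately show ?thesis by blast
qed

lemma nonneg_fill_two:
  assumes t: "t = 1 \<or> t = -1"
    and split: "vsplit n (diagram n (sym_tableau P0 G0 t)) P0 \<or> hsplit n (diagram n (sym_tableau P0 G0 t)) P0"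
  shows "nonneg_fill lam n s (sym_tableau P0 G0 t) = F"
proof -
  interpret cornered_filling P0 G0 n by (rule cornered_placed)
  let ?X = "sym_tableau P0 G0 t"
  have half: "(SOME S. nonneg_part_ok lam n s ?X S) = P0"
  proof (rule some_equality)
    show "nonneg_part_ok lam n s ?X P0"
      unfolding nonneg_part_ok_def card_zero_boxes_two[OF t] neg_count_two[OF t]
      using split has_shape_placed parity_placed by simp
    fix S assume "nonneg_part_ok lam n s ?X S"
    then show "S = P0"
      unfolding nonneg_part_ok_def card_zero_boxes_two[OF t] using split_unique[OF t parity_placed] by auto
  qed
  show ?thesis
    unfolding nonneg_fill_def half using box_entry_two[OF t] by (intro fill_of_placed) simp
qed

lemma T_horiz_realization:
  assumes "(0, 1) \<in> P0" "G0 (0, 1) < - G0 (0, 0)"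
  shows "\<exists>X\<in>T_horiz lam n s. nonneg_fill lam n s X = F"
proof -
  interpret cornered_filling P0 G0 n by (rule cornered_placed)
  have t: "(1::int) = 1 \<or> (1::int) = -1" by simp
  have "sym_tableau P0 G0 1 \<in> T_horiz lam n s"
    unfolding T_horiz_def using D_tableau_horiz[OF assms(1)] standard_horiz[OF assms]
      card_zero_boxes_two[OF t] hsplit_horiz has_shape_placed neg_count_two[OF t] parity_placed
    by auto
  moreover have "nonneg_fill lam n s (sym_tableau P0 G0 1) = F"
    using nonneg_fill_two[OF t] hsplit_horiz by blast
  ultimately show ?thesis by blast
qed

lemma T_vert_realization:
  assumes "(-1, 0) \<in> P0" "- G0 (0, 0) < G0 (-1, 0)"
  shows "\<exists>X\<in>T_vert lam n s. nonneg_fill lam n s X = F"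
proof -
  interpret cornered_filling P0 G0 n by (rule cornered_placed)
  have t: "(-1::int) = 1 \<or> (-1::int) = -1" by simp
  have "sym_tableau P0 G0 (-1) \<in> T_vert lam n s"
    unfolding T_vert_def using D_tableau_vert[OF assms(1)] standard_vert[OF assms]
      card_zero_boxes_two[OF t] vsplit_vert has_shape_placed neg_count_two[OF t] parity_placed
    by auto
  moreover have "nonneg_fill lam n s (sym_tableau P0 G0 (-1)) = F"
    using nonneg_fill_two[OF t] vsplit_vert by blast
  ultimately show ?thesis by blast
qed

lemma T_zero_realization: "\<exists>X\<in>T_zero lam n s. nonneg_fill lam n s X = F"
proof -
  interpret cornered_filling P0 G0 n by (rule cornered_placed)
  show ?thesis
    by (cases rule: corner_condition_cases)
      (use T_box_realization T_horiz_realization T_vert_realization in \<open>auto simp: T_zero_def\<close>)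
qed

end

section \<open>The filling read off a tableau\<close>

lemma fill_of_tableau:
  fixes s :: bool
  assumes dt: "D_tableau n pos" and st: "standard n pos"
    and fin: "finite lam" and ne: "lam \<noteq> {}" and S: "S = translate v ` lam"
    and sub: "S \<subseteq> diagram n pos" and nonneg: "\<forall>b\<in>S. 0 \<le> content b"
    and one_zero: "\<forall>b\<in>S. \<forall>b'\<in>S. content b = 0 \<longrightarrow> content b' = 0 \<longrightarrow> b = b'"
  defines "F \<equiv> fill_of lam n s pos S"
  shows "standard_filling lam n F" and "\<forall>b\<in>lam. pos (F b) = translate v b"
    and "\<forall>b. b \<notin> lam \<longrightarrow> F b = 0"
    and "card {b\<in>lam. F b < 0} = card {b\<in>S. box_entry n s pos b < 0}"
proof -
  let ?G = "box_entry n s pos"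
  have F: "F b = (if b \<in> lam then ?G (translate v b) else 0)" for b
    unfolding F_def fill_of_translate[OF fin ne S] by simp
  have "standard_filling S n ?G \<and> (\<forall>b\<in>S. pos (?G b) = b)"
    using sub box_entry_mem_entries[OF dt]
    by (intro standard_filling_of_tableau[OF dt st nonneg one_zero]) blast
  then have G: "standard_filling lam n (\<lambda>b. ?G (translate v b))" "\<forall>b\<in>lam. pos (?G (translate v b)) = translate v b"
    unfolding S standard_filling_translate_iff by auto
  show "standard_filling lam n F" using G(1) F standard_filling_cong[of lam F] by simp
  show "\<forall>b\<in>lam. pos (F b) = translate v b" using G(2) F by simp
  show "\<forall>b. b \<notin> lam \<longrightarrow> F b = 0" using F by simp
  show "card {b\<in>lam. F b < 0} = card {b\<in>S. ?G b < 0}"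
    unfolding S card_negatives_translate using F by (metis (no_types, lifting))
qed

lemma T_m_analysis:
  assumes Y: "Y \<in> T_m lam n m s" and fin: "finite lam" and "1 \<le> m" and corner: "lower_left_corner lam c"
  obtains v where "pos_fill lam n s Y \<in> standard_fillings lam n s"
    "\<forall>b\<in>lam. Y (pos_fill lam n s Y b) = translate v b"
    "content (translate v c) = int m" "inj_on Y (Nums n)"
proof -
  let ?S = "pos_boxes n Y" and ?G = "box_entry n s Y"
  have dt: "D_tableau n Y" and st: "standard n Y"
    and ex: "\<exists>b\<in>diagram n Y. content b = int m"
    and ge: "\<forall>b\<in>diagram n Y. 0 \<le> content b \<longrightarrow> int m \<le> content b"
    and parity: "parity_ok s (neg_count n Y ?S)"
    and shape: "has_shape lam ?S"
    using Y unfolding T_m_def by auto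
  obtain v where v: "?S = translate v ` lam" using shape unfolding has_shape_def by blast
  have S_pos: "\<forall>b\<in>?S. 0 < content b" "?S \<subseteq> diagram n Y" unfolding pos_boxes_def by auto
  have ne: "lam \<noteq> {}" using corner unfolding lower_left_corner_def by auto
  have inj: "inj_on Y (Nums n)"
    using ge \<open>1 \<le> m\<close> by (intro inj_on_if_no_zero_box[OF dt]) force
  have "\<forall>b\<in>?S. 0 \<le> content b" "\<forall>b\<in>?S. \<forall>b'\<in>?S. content b = 0 \<longrightarrow> content b' = 0 \<longrightarrow> b = b'"
    using S_pos(1) by force+
  note fill = fill_of_tableau[OF dt st fin ne v S_pos(2) this, where s = s, folded pos_fill_def]
  have "\<forall>b\<in>?S. entries n Y b = {?G b}" using entries_eq_box_entry[OF dt] S_pos(2) inj by blast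
  then have "neg_count n Y ?S = card {b\<in>?S. ?G b < 0}" by (rule neg_count_eq_card)
  with parity fill(4) have "parity_ok s (card {b\<in>lam. pos_fill lam n s Y b < 0})" by simp
  with fill have "pos_fill lam n s Y \<in> standard_fillings lam n s"
    unfolding standard_fillings_def by blast
  moreover have "content (translate v c) = int m"
  proof -
    obtain b0 where b0: "b0 \<in> diagram n Y" "content b0 = int m" using ex by blast
    with \<open>1 \<le> m\<close> have "b0 \<in> ?S" unfolding pos_boxes_def by simp
    with v obtain b1 where "b1 \<in> lam" "b0 = translate v b1" by blast
    with b0 content_lower_left_corner_le[OF corner] have "content (translate v c) \<le> int m" by fastforce
    moreover have "translate v c \<in> ?S" using v corner unfolding lower_left_corner_def by blast
    ultimately show ?thesis using ge S_pos by force
  qed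
  ultimately show ?thesis using that fill(2) inj by blast
qed

lemma T_zero_nonneg_half:
  assumes "X \<in> T_zero lam n s"
  shows "D_tableau n X" "standard n X" "nonneg_part_ok lam n s X (SOME S. nonneg_part_ok lam n s X S)"
proof -
  have "D_tableau n X \<and> standard n X \<and> (\<exists>S. nonneg_part_ok lam n s X S)"
    using assms unfolding T_zero_def
  proof (elim UnE)
    assume "X \<in> T_box lam n"
    then show ?thesis unfolding T_box_def nonneg_part_ok_def by auto
  next
    assume "X \<in> T_horiz lam n s"
    then show ?thesis unfolding T_horiz_def nonneg_part_ok_def by auto
  next
    assume "X \<in> T_vert lam n s"
    then show ?thesis unfolding T_vert_def nonneg_part_ok_def by auto
  qed
  then show "D_tableau n X" "standard n X"
    and "nonneg_part_ok lam n s X (SOME S. nonneg_part_ok lam n s X S)"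
    using someI_ex[of "nonneg_part_ok lam n s X"] by simp_all
qed

text \<open>Counting boxes: a tableau with two boxes of content 0 has 2n boxes, hence is injective,
  and each side of a split into n and n boxes contains n - 1 boxes of nonzero content, hence
  exactly one of the two boxes of content 0.\<close>

lemma split_two_zero_boxes:
  assumes dt: "D_tableau n X" and two: "card (zero_boxes n X) = 2"
    and split: "vsplit n (diagram n X) S \<or> hsplit n (diagram n X) S"
  shows "inj_on X (Nums n)" "\<exists>z\<in>S. content z = 0 \<and> (\<forall>b\<in>S. content b = 0 \<longrightarrow> b = z)"
proof -
  let ?D = "diagram n X" and ?Z = "zero_boxes n X"
  let ?Dp = "{b\<in>?D. content b > 0}" and ?Dn = "{b\<in>?D. content b < 0}"
  note S = vsplit_or_hsplitD[OF split]
  have fin_D: "finite ?D" unfolding diagram_def by simp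
  then have fin_S: "finite S" using S(1) finite_subset by blast
  have card_D: "card ?D = 2 * n"
    using card_Diff_subset[OF fin_S S(1)] card_mono[OF fin_D S(1)] S(2,3) by simp
  then show "inj_on X (Nums n)"
    by (intro eq_card_imp_inj_on) (simp_all add: card_Nums diagram_def)
  from card_D card_diagram_contents[OF dt] two have card_Dp: "card ?Dp + 1 = n" "card ?Dn + 1 = n"
    by auto
  have fin_Z: "finite ?Z" unfolding zero_boxes_def using fin_D by simp
  have "S \<subseteq> ?Dp \<union> (?Z \<inter> S)" "?D - S \<subseteq> ?Dn \<union> (?Z - S)"
    using S(1,4,5) unfolding zero_boxes_def by force+
  then have "card S \<le> card (?Dp \<union> (?Z \<inter> S))" "card (?D - S) \<le> card (?Dn \<union> (?Z - S))"
    using fin_D fin_Z by (auto intro!: card_mono)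
  then have "card S \<le> card ?Dp + card (?Z \<inter> S)" "card (?D - S) \<le> card ?Dn + card (?Z - S)"
    using card_Un_le order_trans by blast+
  moreover have "card ?Z = card (?Z \<inter> S) + card (?Z - S)"
    using fin_Z by (metis Int_Diff_Un Int_Diff_disjoint card_Un_disjoint finite_Diff finite_Int)
  ultimately have "card (?Z \<inter> S) = 1" using card_Dp S(2,3) two by linarith
  then obtain z where z: "?Z \<inter> S = {z}" by (rule card_1_singletonE)
  then show "\<exists>z\<in>S. content z = 0 \<and> (\<forall>b\<in>S. content b = 0 \<longrightarrow> b = z)"
    using S(1) unfolding zero_boxes_def by blast
qed

lemma nonneg_part_okD:
  assumes dt: "D_tableau n X" and ok: "nonneg_part_ok lam n s X S"
  shows "has_shape lam S" "S \<subseteq> diagram n X" "\<forall>b\<in>S. 0 \<le> content b"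
    "\<forall>b\<in>diagram n X - S. content b \<le> 0"
    "\<exists>z\<in>S. content z = 0 \<and> (\<forall>b\<in>S. content b = 0 \<longrightarrow> b = z)"
    "card (zero_boxes n X) = 1 \<Longrightarrow> S = nonneg_boxes n X"
    "card (zero_boxes n X) \<noteq> 1 \<Longrightarrow> inj_on X (Nums n) \<and> parity_ok s (neg_count n X S)"
proof -
  show "has_shape lam S" using ok unfolding nonneg_part_ok_def by blast
  consider (one) "card (zero_boxes n X) = 1" "S = nonneg_boxes n X"
    | (two) "card (zero_boxes n X) = 2" "vsplit n (diagram n X) S \<or> hsplit n (diagram n X) S"
        "parity_ok s (neg_count n X S)"
    using ok unfolding nonneg_part_ok_def by blast
  note kinds = this
  have "S \<subseteq> diagram n X \<and> (\<forall>b\<in>S. 0 \<le> content b) \<and> (\<forall>b\<in>diagram n X - S. content b \<le> 0) \<and>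
      (\<exists>z\<in>S. content z = 0 \<and> (\<forall>b\<in>S. content b = 0 \<longrightarrow> b = z))"
  proof (cases rule: kinds)
    case one
    then obtain z where "zero_boxes n X = {z}" by (metis card_1_singletonE)
    with one(2) have "z \<in> S \<and> content z = 0 \<and> (\<forall>b\<in>S. content b = 0 \<longrightarrow> b = z)"
      unfolding nonneg_boxes_def zero_boxes_def by auto
    moreover have "S \<subseteq> diagram n X \<and> (\<forall>b\<in>S. 0 \<le> content b) \<and> (\<forall>b\<in>diagram n X - S. content b \<le> 0)"
      using one(2) unfolding nonneg_boxes_def by auto
    ultimately show ?thesis by blast
  next
    case two
    with vsplit_or_hsplitD[OF two(2)] split_two_zero_boxes[OF dt two(1,2)] show ?thesis by blast
  qed
  then show "S \<subseteq> diagram n X" "\<forall>b\<in>S. 0 \<le> content b" "\<forall>b\<in>diagram n X - S. content b \<le> 0"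
    "\<exists>z\<in>S. content z = 0 \<and> (\<forall>b\<in>S. content b = 0 \<longrightarrow> b = z)" by blast+
  show "S = nonneg_boxes n X" if "card (zero_boxes n X) = 1"
    using that by (cases rule: kinds) simp_all
  show "inj_on X (Nums n) \<and> parity_ok s (neg_count n X S)" if "card (zero_boxes n X) \<noteq> 1"
  proof (cases rule: kinds)
    case two
    then show ?thesis using split_two_zero_boxes(1)[OF dt two(1,2)] by blast
  qed (use that in simp)
qed

lemma parity_one_zero_box:
  assumes dt: "D_tableau n X" and one: "card (zero_boxes n X) = 1"
  shows "parity_ok s (card {b\<in>nonneg_boxes n X. box_entry n s X b < 0})"
proof -
  let ?S = "nonneg_boxes n X" and ?G = "box_entry n s X"
  obtain z where z: "zero_boxes n X = {z}" using one by (rule card_1_singletonE)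
  then have zS: "z \<in> ?S" "content z = 0" "z \<in> diagram n X"
    unfolding zero_boxes_def nonneg_boxes_def by auto
  have fin_S: "finite ?S" unfolding nonneg_boxes_def diagram_def by simp
  have pos: "pos_boxes n X = ?S - {z}"
  proof (intro equalityI subsetI)
    fix b assume "b \<in> pos_boxes n X"
    then have "b \<in> diagram n X" "0 < content b" unfolding pos_boxes_def by auto
    moreover from this(2) have "b \<noteq> z" using zS(2) by auto
    ultimately show "b \<in> ?S - {z}" unfolding nonneg_boxes_def by simp
  next
    fix b assume "b \<in> ?S - {z}"
    then have "b \<in> diagram n X" "0 \<le> content b" "b \<noteq> z" unfolding nonneg_boxes_def by auto
    moreover from this(1,3) have "content b \<noteq> 0" using z unfolding zero_boxes_def by blast
    ultimately show "b \<in> pos_boxes n X" unfolding pos_boxes_def by simp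
  qed
  let ?e = "?G z"
  have e: "?e \<in> Nums n" "X ?e = z" using box_entry_mem_entries[OF dt zS(3)] unfolding entries_def by auto
  then have e_nonzero: "?e \<noteq> 0" unfolding Nums_def by simp
  have "content (X (- ?e)) = 0" using D_tableau_content_uminus[OF dt e(1)] e(2) zS(2) by simp
  then have "X (- ?e) \<in> zero_boxes n X" using e(1) unfolding zero_boxes_def diagram_def by auto
  with z have "X (- ?e) = z" by simp
  then have "entries n X z = {?e, - ?e}"
    using e D_tableau_same_box[OF dt] unfolding entries_def by fastforce
  from box_entry_pair_iff[OF this e_nonzero, of s]
  have "parity_ok s (neg_count n X (pos_boxes n X) + (if ?e < 0 then 1 else 0))" by simp
  moreover have "neg_count n X (pos_boxes n X) = card {b\<in>?S - {z}. ?G b < 0}"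
  proof (unfold pos, rule neg_count_eq_card, intro ballI)
    fix b assume b: "b \<in> ?S - {z}"
    then have "b \<in> diagram n X" "content b \<noteq> 0"
      using z unfolding nonneg_boxes_def zero_boxes_def by auto
    then show "entries n X b = {?G b}" using entries_eq_box_entry[OF dt] by blast
  qed
  ultimately show ?thesis using card_negatives_remove[OF fin_S zS(1), of ?G] by simp
qed

lemma corner_condition_if_pair:
  assumes st: "standard n X" and F: "standard_filling lam n F" and c: "c \<in> lam"
    and placed: "\<forall>b\<in>lam. X (F b) = translate v b" and pair: "X (- F c) = translate v c"
  shows "corner_condition lam F c"
proof -
  have F_Nums: "b \<in> lam \<Longrightarrow> F b \<in> Nums n" for b using F unfolding standard_filling_def by blast
  have both: "X \<bar>F c\<bar> = translate v c" "X (- \<bar>F c\<bar>) = translate v c" "\<bar>F c\<bar> \<in> Nums n"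
    using placed pair c F_Nums[OF c] by (auto simp: abs_if)
  have less: "k < l" if "k \<in> Nums n" "l \<in> Nums n" "precedes (X k) (X l)" for k l
    using st that unfolding standard_iff_precedes by blast
  show ?thesis unfolding corner_condition_def
  proof (intro conjI impI)
    assume "(fst c, snd c + 1) \<in> lam"
    with placed both less F_Nums show "\<bar>F c\<bar> < F (fst c, snd c + 1)"
      by (simp add: precedes_def translate_def)
  next
    assume "(fst c - 1, snd c) \<in> lam"
    with placed both less F_Nums show "F (fst c - 1, snd c) < - \<bar>F c\<bar>"
      by (simp add: precedes_def translate_def)
  qed
qed

lemma parity_nonneg_half:
  assumes dt: "D_tableau n X" and ok: "nonneg_part_ok lam n s X S"
  shows "parity_ok s (card {b\<in>S. box_entry n s X b < 0})"
proof (cases "card (zero_boxes n X) = 1")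
  case True
  with parity_one_zero_box[OF dt] nonneg_part_okD(6)[OF dt ok] show ?thesis by simp
next
  case False
  with nonneg_part_okD(7)[OF dt ok] have "inj_on X (Nums n)" "parity_ok s (neg_count n X S)"
    by auto
  moreover have "neg_count n X S = card {b\<in>S. box_entry n s X b < 0}"
    using nonneg_part_okD(2)[OF dt ok] entries_eq_box_entry[OF dt] \<open>inj_on X (Nums n)\<close>
    by (intro neg_count_eq_card) blast
  ultimately show ?thesis by simp
qed

lemma diagonal_offset:
  assumes "content a = content b"
  obtains d where "b = (fst a + d, snd a + d)"
proof
  show "b = (fst a + (fst b - fst a), snd a + (fst b - fst a))"
    using assms unfolding content_def by (simp add: prod_eq_iff)
qed

text \<open>The second box of content 0, holding - F c, lies on the diagonal through the corner
  of the placed copy of lam, below or above it; the neighbour of the corner on that side lies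
  between the two, so its entry violates the corner condition.\<close>

lemma not_corner_condition_if_injective:
  assumes dt: "D_tableau n X" and st: "standard n X" and inj: "inj_on X (Nums n)"
    and F: "standard_filling lam n F" and c: "c \<in> lam"
    and placed: "\<forall>b\<in>lam. X (F b) = translate v b"
    and nonpos: "\<forall>b\<in>diagram n X - translate v ` lam. content b \<le> 0"
    and zero: "content (translate v c) = 0"
  shows "\<not> corner_condition lam F c"
proof
  assume cc: "corner_condition lam F c"
  let ?z = "translate v c" and ?z' = "X (- F c)"
  have F_Nums: "b \<in> lam \<Longrightarrow> F b \<in> Nums n" for b using F unfolding standard_filling_def by blast
  have Fc: "F c \<in> Nums n" "- F c \<in> Nums n" "F c \<noteq> 0" using F_Nums[OF c] unfolding Nums_def by auto
  have Xz: "X (F c) = ?z" using placed c by blast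
  have D: "?z \<in> diagram n X" "?z' \<in> diagram n X" using Xz Fc unfolding diagram_def by force+
  have z'0: "content ?z' = 0" using D_tableau_content_uminus[OF dt Fc(1)] Xz zero by simp
  with zero have "content ?z = content ?z'" by simp
  then obtain d where z': "?z' = (fst ?z + d, snd ?z + d)" by (rule diagonal_offset)
  moreover have "?z' \<noteq> ?z" using inj Fc Xz unfolding inj_on_def by (metis neg_equal_zero)
  ultimately have "d \<noteq> 0" by auto
  have between: "b \<in> lam \<and> (translate v b \<le> ?z' \<longrightarrow> F b < - F c) \<and> (?z' \<le> translate v b \<longrightarrow> - F c < F b)"
    if "translate v b \<in> diagram n X" "content (translate v b) = 1" for b
  proof -
    have "\<not> content (translate v b) \<le> 0" using that(2) by simp
    with that(1) nonpos have "translate v b \<in> translate v ` lam" by blast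
    then have b: "b \<in> lam" by auto
    with placed have "X (F b) = translate v b" by blast
    moreover from this that(2) z'0 have "F b \<noteq> - F c" by auto
    ultimately show ?thesis
      using b standard_entries_mono[OF dt st inj F_Nums[OF b] Fc(2)]
        standard_entries_mono[OF dt st inj Fc(2) F_Nums[OF b]] by auto
  qed
  have skew: "skew_diagram (diagram n X)" using dt unfolding D_tableau_def by blast
  consider "0 < d" | "d < 0" using \<open>d \<noteq> 0\<close> by linarith
  then show False
  proof cases
    case 1
    let ?r = "(fst c, snd c + 1)"
    have "?z \<le> translate v ?r" "translate v ?r \<le> ?z'"
      using z' 1 by (simp_all add: translate_def less_eq_prod_def)
    moreover have "content (translate v ?r) = 1" using zero by (simp add: content_def translate_def)
    ultimately have "?r \<in> lam" "F ?r < - F c" using between skew_diagramD[OF skew D] by blast+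
    with cc abs_ge_minus_self[of "F c"] show False unfolding corner_condition_def by simp
  next
    case 2
    let ?a = "(fst c - 1, snd c)"
    have "?z' \<le> translate v ?a" "translate v ?a \<le> ?z"
      using z' 2 by (simp_all add: translate_def less_eq_prod_def)
    moreover have "content (translate v ?a) = 1" using zero by (simp add: content_def translate_def)
    ultimately have "?a \<in> lam" "- F c < F ?a" using between skew_diagramD[OF skew D(2) D(1)] by blast+
    with cc abs_ge_self[of "F c"] show False unfolding corner_condition_def by simp
  qed
qed

lemma T_zero_analysis:
  assumes X: "X \<in> T_zero lam n s" and fin: "finite lam" and corner: "lower_left_corner lam c"
  obtains v where "nonneg_fill lam n s X \<in> standard_fillings lam n s"
    "\<forall>b\<in>lam. X (nonneg_fill lam n s X b) = translate v b"
    "content (translate v c) = 0"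
    "card (zero_boxes n X) = 1 \<longleftrightarrow> corner_condition lam (nonneg_fill lam n s X) c"
    "card (zero_boxes n X) \<noteq> 1 \<Longrightarrow> inj_on X (Nums n)"
proof -
  let ?S = "SOME S. nonneg_part_ok lam n s X S" and ?F = "nonneg_fill lam n s X"
  note half = T_zero_nonneg_half[OF X]
  note props = nonneg_part_okD[OF half(1) half(3)]
  have c: "c \<in> lam" using corner unfolding lower_left_corner_def by blast
  then have ne: "lam \<noteq> {}" by blast
  obtain v where v: "?S = translate v ` lam" using props(1) unfolding has_shape_def by blast
  obtain z where z: "z \<in> ?S" "content z = 0" "\<forall>b\<in>?S. content b = 0 \<longrightarrow> b = z" using props(5) by blast
  then have "\<forall>b\<in>?S. \<forall>b'\<in>?S. content b = 0 \<longrightarrow> content b' = 0 \<longrightarrow> b = b'" by blast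
  note fill = fill_of_tableau[OF half(1,2) fin ne v props(2,3) this, where s = s, folded nonneg_fill_def]
  have zc: "translate v c = z"
  proof -
    obtain b where b: "b \<in> lam" "z = translate v b" using z(1) v by blast
    with z(2) content_lower_left_corner_le[OF corner b(1)] have "content (translate v c) \<le> 0" by simp
    moreover have "translate v c \<in> ?S" using v c by blast
    ultimately show ?thesis using props(3) z(3) by force
  qed
  have "?F \<in> standard_fillings lam n s"
    using fill(1,3,4) parity_nonneg_half[OF half(1,3)] unfolding standard_fillings_def by simp
  moreover have "card (zero_boxes n X) = 1 \<longleftrightarrow> corner_condition lam ?F c"
  proof
    assume one: "card (zero_boxes n X) = 1"
    have Fc: "?F c \<in> Nums n" "X (?F c) = z" using fill(1,2) c zc unfolding standard_filling_def by auto
    have "X (- ?F c) \<in> zero_boxes n X" "z \<in> zero_boxes n X"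
      using D_tableau_content_uminus[OF half(1) Fc(1)] Fc z(1,2) props(2)
      unfolding zero_boxes_def diagram_def by auto
    with one have "X (- ?F c) = translate v c" using zc by (metis card_1_singletonE singletonD)
    then show "corner_condition lam ?F c"
      by (rule corner_condition_if_pair[OF half(2) fill(1) c fill(2)])
  next
    assume cc: "corner_condition lam ?F c"
    show "card (zero_boxes n X) = 1"
    proof (rule ccontr)
      assume "card (zero_boxes n X) \<noteq> 1"
      with props(7) have "inj_on X (Nums n)" by blast
      from not_corner_condition_if_injective[OF half(1,2) this fill(1) c fill(2)] props(4) v zc z(2) cc
      show False by simp
    qed
  qed
  ultimately show ?thesis using that fill(2) zc z(2) props(7) by blast
qed

section \<open>The two bijections\<close>

lemma content_eq_if_same_placement:
  assumes dt: "D_tableau n p" "D_tableau n p'"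
    and F: "standard_filling lam n F" and fin: "finite lam" and card: "card lam = n"
    and placed: "\<forall>b\<in>lam. p (F b) = translate v b" "\<forall>b\<in>lam. p' (F b) = translate v' b"
    and shift: "snd v - fst v = snd v' - fst v'"
    and k: "k \<in> Nums n"
  shows "content (p k) = content (p' k)"
proof -
  obtain b where b: "b \<in> lam" "\<bar>F b\<bar> = \<bar>k\<bar>" using standard_filling_abs_surj[OF F fin card k] by blast
  have Fb: "F b \<in> Nums n" using F b(1) unfolding standard_filling_def by blast
  have same: "content (p (F b)) = content (p' (F b))" using placed b(1) shift by simp
  from b(2) have "k = F b \<or> k = - F b" by arith
  then show ?thesis
    using same D_tableau_content_uminus[OF dt(1) Fb] D_tableau_content_uminus[OF dt(2) Fb] by auto
qed

lemma T_zero_rank_0: "T_zero lam 0 s = {}"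
  unfolding T_zero_def T_box_def T_horiz_def T_vert_def zero_boxes_def diagram_def by simp

lemma T_m_rank_0: "T_m lam 0 m s = {}"
  unfolding T_m_def diagram_def by simp

lemma T_m_fill_inj:
  assumes Y: "Y \<in> T_m lam n m s" "Y' \<in> T_m lam n m s"
    and skew: "skew_diagram lam" and card: "card lam = n" and "1 \<le> m"
    and eq: "pos_fill lam n s Y = pos_fill lam n s Y'"
  shows "same_tableau n Y Y'"
proof -
  have fin: "finite lam" using skew unfolding skew_diagram_iff by simp
  have "lam \<noteq> {}" using Y(1) card T_m_rank_0 by fastforce
  then obtain c where c: "lower_left_corner lam c" using lower_left_corner_exists[OF skew] by blast
  obtain v where v: "pos_fill lam n s Y \<in> standard_fillings lam n s"
      "\<forall>b\<in>lam. Y (pos_fill lam n s Y b) = translate v b"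
      "content (translate v c) = int m" "inj_on Y (Nums n)"
    using T_m_analysis[OF Y(1) fin \<open>1 \<le> m\<close> c] by blast
  obtain v' where v': "\<forall>b\<in>lam. Y' (pos_fill lam n s Y b) = translate v' b"
      "content (translate v' c) = int m" "inj_on Y' (Nums n)"
    using T_m_analysis[OF Y(2) fin \<open>1 \<le> m\<close> c] unfolding eq by blast
  have dt: "D_tableau n Y" "D_tableau n Y'" using Y unfolding T_m_def by auto
  have "\<forall>k\<in>Nums n. content (Y k) = content (Y' k)"
    using v(1,3) v'(2) unfolding standard_fillings_def
    by (intro ballI content_eq_if_same_placement[OF dt _ fin card v(2) v'(1)]) auto
  with v(4) v'(3) show ?thesis unfolding same_tableau_def inj_on_def by blast
qed

lemma T_zero_fill_inj:
  assumes X: "X \<in> T_zero lam n s" "X' \<in> T_zero lam n s"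
    and skew: "skew_diagram lam" and card: "card lam = n"
    and eq: "nonneg_fill lam n s X = nonneg_fill lam n s X'"
  shows "same_tableau n X X'"
proof -
  let ?F = "nonneg_fill lam n s X"
  have fin: "finite lam" using skew unfolding skew_diagram_iff by simp
  have "lam \<noteq> {}" using X(1) card T_zero_rank_0 by fastforce
  then obtain c where c: "lower_left_corner lam c" using lower_left_corner_exists[OF skew] by blast
  obtain v where v: "?F \<in> standard_fillings lam n s" "\<forall>b\<in>lam. X (?F b) = translate v b"
      "content (translate v c) = 0" "card (zero_boxes n X) = 1 \<longleftrightarrow> corner_condition lam ?F c"
      "card (zero_boxes n X) \<noteq> 1 \<Longrightarrow> inj_on X (Nums n)"
    using T_zero_analysis[OF X(1) fin c] by blast
  obtain v' where v': "\<forall>b\<in>lam. X' (?F b) = translate v' b"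
      "content (translate v' c) = 0" "card (zero_boxes n X') = 1 \<longleftrightarrow> corner_condition lam ?F c"
      "card (zero_boxes n X') \<noteq> 1 \<Longrightarrow> inj_on X' (Nums n)"
    using T_zero_analysis[OF X(2) fin c] unfolding eq by blast
  have dt: "D_tableau n X" "D_tableau n X'" using T_zero_nonneg_half X by blast+
  have content: "\<forall>k\<in>Nums n. content (X k) = content (X' k)"
    using v(1,3) v'(2) unfolding standard_fillings_def
    by (intro ballI content_eq_if_same_placement[OF dt _ fin card v(2) v'(1)]) auto
  have "\<forall>k\<in>Nums n. \<forall>l\<in>Nums n. X k = X l \<longleftrightarrow> X' k = X' l"
  proof (cases "corner_condition lam ?F c")
    case True
    with v(4) v'(3) content show ?thesis
      using same_box_iff_one_zero_box[OF dt(1)] same_box_iff_one_zero_box[OF dt(2)] by simp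
  next
    case False
    with v(4,5) v'(3,4) show ?thesis unfolding inj_on_def by blast
  qed
  with content show ?thesis unfolding same_tableau_def by blast
qed

lemma exists_T_m_pos_fill:
  assumes "skew_diagram lam" "card lam = n" "lam \<noteq> {}" "1 \<le> m" "F \<in> standard_fillings lam n s"
  shows "\<exists>Y\<in>T_m lam n m s. pos_fill lam n s Y = F"
proof -
  obtain c where "lower_left_corner lam c" using lower_left_corner_exists assms(1,3) by blast
  with assms show ?thesis using corner_placement.T_m_realization unfolding corner_placement_def by blast
qed

lemma exists_T_zero_nonneg_fill:
  assumes "skew_diagram lam" "card lam = n" "lam \<noteq> {}" "F \<in> standard_fillings lam n s"
  shows "\<exists>X\<in>T_zero lam n s. nonneg_fill lam n s X = F"
proof -
  obtain c where "lower_left_corner lam c" using lower_left_corner_exists assms(1,3) by blast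
  with assms show ?thesis using corner_placement.T_zero_realization unfolding corner_placement_def by blast
qed

lemma nonneg_fill_mem_standard_fillings:
  assumes "X \<in> T_zero lam n s" "skew_diagram lam" "card lam = n"
  shows "nonneg_fill lam n s X \<in> standard_fillings lam n s"
proof -
  have "lam \<noteq> {}" using assms(1,3) T_zero_rank_0 by fastforce
  then obtain c where "lower_left_corner lam c" using lower_left_corner_exists assms(2) by blast
  with T_zero_analysis[OF assms(1)] assms(2) show ?thesis unfolding skew_diagram_iff by blast
qed

lemma pos_fill_mem_standard_fillings:
  assumes "Y \<in> T_m lam n m s" "skew_diagram lam" "card lam = n" "1 \<le> m"
  shows "pos_fill lam n s Y \<in> standard_fillings lam n s"
proof -
  have "lam \<noteq> {}" using assms(1,3) T_m_rank_0 by fastforce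
  then obtain c where "lower_left_corner lam c" using lower_left_corner_exists assms(2) by blast
  with T_m_analysis[OF assms(1)] assms(2,4) show ?thesis unfolding skew_diagram_iff by blast
qed

theorem theorem4p9:
  fixes lam :: "box set" and n m :: nat
  assumes "skew_diagram lam" and "card lam = n" and "m \<ge> 1"
  shows "\<forall>s::bool.
    (\<forall>X\<in>T_zero lam n s. \<exists>Y\<in>T_m lam n m s. pos_fill lam n s Y = nonneg_fill lam n s X) \<and>
    (\<forall>Y\<in>T_m lam n m s. \<exists>X\<in>T_zero lam n s. nonneg_fill lam n s X = pos_fill lam n s Y) \<and>
    (\<forall>X\<in>T_zero lam n s. \<forall>X'\<in>T_zero lam n s.
        nonneg_fill lam n s X = nonneg_fill lam n s X' \<longrightarrow> same_tableau n X X') \<and>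
    (\<forall>Y\<in>T_m lam n m s. \<forall>Y'\<in>T_m lam n m s.
        pos_fill lam n s Y = pos_fill lam n s Y' \<longrightarrow> same_tableau n Y Y')"
proof (cases "lam = {}")
  case True
  with assms(2) show ?thesis by (simp add: T_zero_rank_0 T_m_rank_0)
next
  case False
  show ?thesis
  proof (intro allI conjI)
    fix s :: bool
    show "\<forall>X\<in>T_zero lam n s. \<exists>Y\<in>T_m lam n m s. pos_fill lam n s Y = nonneg_fill lam n s X"
      using exists_T_m_pos_fill[OF assms(1,2) False assms(3)]
        nonneg_fill_mem_standard_fillings[OF _ assms(1,2)] by blast
    show "\<forall>Y\<in>T_m lam n m s. \<exists>X\<in>T_zero lam n s. nonneg_fill lam n s X = pos_fill lam n s Y"
      using exists_T_zero_nonneg_fill[OF assms(1,2) False]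
        pos_fill_mem_standard_fillings[OF _ assms] by blast
    show "\<forall>X\<in>T_zero lam n s. \<forall>X'\<in>T_zero lam n s.
        nonneg_fill lam n s X = nonneg_fill lam n s X' \<longrightarrow> same_tableau n X X'"
      using T_zero_fill_inj[OF _ _ assms(1,2)] by blast
    show "\<forall>Y\<in>T_m lam n m s. \<forall>Y'\<in>T_m lam n m s.
        pos_fill lam n s Y = pos_fill lam n s Y' \<longrightarrow> same_tableau n Y Y'"
      using T_m_fill_inj[OF _ _ assms] by blast
  qed
qed

end
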